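(* Let $0<s<\frac12$. Let $(\delta_n)_{n\in\mathbb N}$ be a sequence of positive numbers with $\delta_n\to0$; set $\Lambda_n:=1/\delta_n$, let $T_n=L_n(\Lambda_n+1)\delta_n$ with $L_n\in\mathbb N$, and let $u_n$ be a minimizer of $\mathcal F^{T_n}_s$ in $\mathscr A^{T_n,\Lambda_n,\delta_n}$. Then $$\lim_{n\to\infty}\mathcal F^{T_n}_s(u_n)=\frac12\int_0^1\int_{\mathbb R}\frac{|w(x)-w(y)|^2}{|x-y|^{1+2s}}\,dy\,dx,$$ where $w(x):=x-\lfloor x\rfloor$.
   Context: For $\Lambda,\delta>0$ and $T=L(\Lambda+1)\delta$ with $L\in\mathbb N$, the admissible class $\mathscr A^{T,\Lambda,\delta}$ is the set of continuous, $T$-periodic, piecewise affine functions $u:\mathbb R\to\mathbb R$ with $u'\in\{1,-\Lambda\}$ a.e., such that $(u')^{-1}(\{-\Lambda\})=\bigcup_{k\in\mathbb N}I^k$ for some intervals $I^k$ with $|I^k|=\delta$ for all $k$ and $\#(I^i\cap I^j)\le1$ for all $i\ne j$. For $0<s<1$, $$\mathcal F^T_s(u):=\frac1{2T}\int_0^T dx\int_{\mathbb R}\frac{|u(x)-u(y)|^2}{|x-y|^{1+2s}}\,dy.$$ *)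

theory Defs
  imports "HOL-Analysis.Analysis"
begin

definition piecewise_affine :: "(real \<Rightarrow> real) \<Rightarrow> bool" where
  "piecewise_affine u \<longleftrightarrow>
     (\<exists>S. (\<forall>a b. finite (S \<inter> {a..b})) \<and>
          (\<forall>x y. x \<le> y \<longrightarrow> {x..y} \<inter> S = {} \<longrightarrow>
              (\<exists>m c. \<forall>t\<in>{x..y}. u t = m * t + c)))"

definition admissible :: "real \<Rightarrow> real \<Rightarrow> real \<Rightarrow> (real \<Rightarrow> real) set" where
  "admissible T \<Lambda> \<delta> = {u.
     continuous_on UNIV u \<and>
     (\<forall>x. u (x + T) = u x) \<and>
     piecewise_affine u \<and>
     (\<exists>I :: nat \<Rightarrow> real set.
        (\<forall>k. is_interval (I k) \<and> emeasure lborel (I k) = ennreal \<delta>) \<and>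
        (\<forall>i j. i \<noteq> j \<longrightarrow> finite (I i \<inter> I j) \<and> card (I i \<inter> I j) \<le> 1) \<and>
        (AE x in lborel. (u has_real_derivative
            (if x \<in> (\<Union>k. I k) then - \<Lambda> else 1)) (at x)))}"

definition Fs :: "real \<Rightarrow> real \<Rightarrow> (real \<Rightarrow> real) \<Rightarrow> ennreal" where
  "Fs s T u = ennreal (1 / (2 * T)) *
     (\<integral>\<^sup>+ x. (\<integral>\<^sup>+ y. ennreal (\<bar>u x - u y\<bar>\<^sup>2 / \<bar>x - y\<bar> powr (1 + 2 * s)) \<partial>lborel)
        * indicator {0..T} x \<partial>lborel)"

end

theory Submission
  imports Defs
begin

text \<open>
  Fubini and a translation give 2T\<cdot>Fs s T u = \<integral> |h|^(-p) G(h) dh with p = 1 + 2s and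
  G(h) = \<integral>[0,T] (u(x+h) - u(x))^2 dx, so everything reduces to bounds on G(h) for a fixed shift h.
  Put P = 1 + \<delta>, z = (u(\<cdot>+h) - u)/P and \<theta> = frac(h/P); z has mean zero over a period.
  For admissible u, the descent set between two points outside the interiors of the descent
  intervals has measure a multiple of \<delta>, so z - \<theta> is an integer there. The parabola z^2 touches
  the chord \<theta>^2 + (2\<theta> - 1)(z - \<theta>) exactly at the integer values of z - \<theta>, which yields
  G(h) \<ge> T P^2 (\<theta>(1 - \<theta>) - \<delta>). The sawtooth of period P is admissible and has \<theta> - 1 \<le> z \<le> \<theta>,
  which yields G(h) \<le> T P^2 \<theta>(1 - \<theta>). Since \<integral>[0,1] (frac(x+h) - frac x)^2 dx = frac h (1 - frac h),
  rescaling h by P turns both bounds into the right-hand side, up to a factor P^(1-2s) \<rightarrow> 1 and an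
  error O(\<delta>^(1-2s)) that vanishes because s < 1/2.
\<close>

lemma periodic_add_nat_mult:
  fixes f :: "real \<Rightarrow> 'b"
  assumes "\<And>x. f (x + T) = f x"
  shows "f (x + real n * T) = f x"
proof (induction n arbitrary: x)
  case (Suc n)
  have "f (x + real (Suc n) * T) = f ((x + real n * T) + T)" by (simp add: algebra_simps)
  then show ?case using assms Suc by simp
qed simp

lemma periodic_add_int_mult:
  fixes f :: "real \<Rightarrow> 'b"
  assumes per: "\<And>x. f (x + T) = f x"
  shows "f (x + real_of_int k * T) = f x"
proof (cases k rule: int_cases2)
  case (nonneg n)
  then show ?thesis using periodic_add_nat_mult[where f=f and T=T, OF per] by simp
next
  case (nonpos n)
  have "f x = f ((x + real_of_int k * T) + real n * T)" by (simp add: nonpos algebra_simps)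
  also have "\<dots> = f (x + real_of_int k * T)" using periodic_add_nat_mult[where f=f and T=T, OF per] by simp
  finally show ?thesis by simp
qed

lemma floor_divide_eq:
  fixes P x :: real
  assumes "P > 0" "of_int k * P \<le> x" "x < of_int k * P + P"
  shows "\<lfloor>x / P\<rfloor> = k"
proof -
  have "of_int k \<le> x / P" "x / P < of_int k + 1"
    using assms by (simp_all add: le_divide_eq divide_less_eq algebra_simps)
  then show ?thesis by (simp add: floor_eq_iff)
qed

lemma floor_divide_bounds:
  fixes P x :: real
  assumes "P > 0"
  shows "of_int \<lfloor>x / P\<rfloor> * P \<le> x" "x < of_int \<lfloor>x / P\<rfloor> * P + P"
proof -
  have "of_int \<lfloor>x / P\<rfloor> \<le> x / P" "x / P < of_int \<lfloor>x / P\<rfloor> + 1"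
    by (simp_all add: of_int_floor_le)
  then show "of_int \<lfloor>x / P\<rfloor> * P \<le> x" "x < of_int \<lfloor>x / P\<rfloor> * P + P"
    using assms by (simp_all add: le_divide_eq divide_less_eq algebra_simps)
qed

lemma integral_periodic_translate:
  fixes f :: "real \<Rightarrow> real"
  assumes cont: "continuous_on UNIV f" and per: "\<And>x. f (x + T) = f x" and T: "T > 0"
  shows "integral {a..a+T} f = integral {0..T} f"
proof -
  define k where "k = \<lfloor>a / T\<rfloor>"
  define a0 where "a0 = a - real_of_int k * T"
  have a0: "0 \<le> a0" "a0 < T"
    using floor_divide_bounds[OF T, of a] unfolding a0_def k_def by auto
  have int: "\<And>c d. f integrable_on {c..d}"
    by (rule integrable_continuous_real) (rule continuous_on_subset[OF cont], simp)
  have shift: "f \<circ> ((+) c) = f" if "\<And>x. f (x + c) = f x" for c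
    using that by (auto simp: add.commute)
  have "integral {a..a+T} f = integral {a0..a0+T} (f \<circ> ((+) (real_of_int k * T)))"
    by (subst integral_shift_Icc_real) (simp add: a0_def)
  also have "\<dots> = integral {a0..T} f + integral {T..a0+T} f"
    using shift[OF periodic_add_int_mult[where f=f and T=T, OF per]] a0 int
    by (simp add: Henstock_Kurzweil_Integration.integral_combine)
  also have "integral {T..a0+T} f = integral {0..a0} (f \<circ> ((+) T))"
    by (subst integral_shift_Icc_real) simp
  also have "\<dots> = integral {0..a0} f" using shift[OF per] by simp
  also have "integral {a0..T} f + integral {0..a0} f = integral {0..T} f"
    using a0 int Henstock_Kurzweil_Integration.integral_combine[of 0 a0 T f] by simp
  finally show ?thesis .
qed

section \<open>Comparing a square with a chord\<close>

text \<open>On \<open>[\<theta> - 1, \<theta>]\<close> the parabola \<open>z\<^sup>2\<close> lies below the chord \<open>\<theta>\<^sup>2 + (2\<theta> - 1)(z - \<theta>)\<close>, and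
  outside it lies above; \<open>chord_defect \<theta> z\<close> is how far it falls below.\<close>

definition chord_defect :: "real \<Rightarrow> real \<Rightarrow> real" where
  "chord_defect \<theta> z = max 0 (- ((z - \<theta>) * (z - \<theta> + 1)))"

lemma square_eq_chord_plus:
  fixes z \<theta> :: real
  shows "z\<^sup>2 = \<theta>\<^sup>2 + (2*\<theta> - 1) * (z - \<theta>) + (z - \<theta>) * (z - \<theta> + 1)"
  by (simp add: power2_eq_square algebra_simps)

lemma square_le_chord:
  fixes z \<theta> :: real
  assumes "\<theta> - 1 \<le> z" "z \<le> \<theta>"
  shows "z\<^sup>2 \<le> \<theta>\<^sup>2 + (2*\<theta> - 1) * (z - \<theta>)"
proof -
  have "(z - \<theta>) * (z - \<theta> + 1) \<le> 0" using assms by (intro mult_nonpos_nonneg) auto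
  then show ?thesis using square_eq_chord_plus[of z \<theta>] by linarith
qed

lemma square_ge_chord_minus_defect:
  fixes z \<theta> :: real
  shows "\<theta>\<^sup>2 + (2*\<theta> - 1) * (z - \<theta>) - chord_defect \<theta> z \<le> z\<^sup>2"
  using square_eq_chord_plus[of z \<theta>] unfolding chord_defect_def by linarith

lemma chord_defect_eq_0_Ints:
  assumes "z - \<theta> \<in> \<int>"
  shows "chord_defect \<theta> z = 0"
proof -
  from assms obtain j where j: "z - \<theta> = of_int j" by (auto elim: Ints_cases)
  have "0 \<le> j * (j + 1)"
    by (cases "j \<ge> 0") (auto intro: mult_nonneg_nonneg mult_nonpos_nonpos)
  then have "0 \<le> real_of_int j * (real_of_int j + 1)"
    by (metis of_int_0_le_iff of_int_1 of_int_add of_int_mult)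
  then show ?thesis unfolding chord_defect_def j by simp
qed

lemma chord_defect_le_quarter: "chord_defect \<theta> z \<le> 1/4"
proof -
  have "- ((z - \<theta>) * (z - \<theta> + 1)) = 1/4 - (z - \<theta> + 1/2)\<^sup>2"
    by (simp add: power2_eq_square algebra_simps)
  moreover have "0 \<le> (z - \<theta> + 1/2)\<^sup>2" by simp
  ultimately show ?thesis unfolding chord_defect_def by (simp add: max_def)
qed

lemma continuous_on_chord_defect [continuous_intros]:
  "continuous_on S z \<Longrightarrow> continuous_on S (\<lambda>x. chord_defect \<theta> (z x))"
  unfolding chord_defect_def by (intro continuous_intros)

lemma integral_chord_of_mean_zero:
  fixes z :: "real \<Rightarrow> real"
  assumes cont: "continuous_on {0..T} z" and T: "0 \<le> T" and mean: "integral {0..T} z = 0"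
  shows "integral {0..T} (\<lambda>x. \<theta>\<^sup>2 + (2*\<theta> - 1) * (z x - \<theta>)) = T * (\<theta> * (1 - \<theta>))"
proof -
  have iz: "z integrable_on {0..T}" by (rule integrable_continuous_real[OF cont])
  have "((\<lambda>x. (\<theta>\<^sup>2 - (2*\<theta> - 1) * \<theta>) + (2*\<theta> - 1) * z x) has_integral
      T * (\<theta>\<^sup>2 - (2*\<theta> - 1) * \<theta>) + (2*\<theta> - 1) * integral {0..T} z) {0..T}"
    using has_integral_const_real[of "\<theta>\<^sup>2 - (2*\<theta> - 1) * \<theta>" 0 T] T
    by (intro has_integral_add has_integral_mult_right integrable_integral iz) simp_all
  moreover have "(\<lambda>x. (\<theta>\<^sup>2 - (2*\<theta> - 1) * \<theta>) + (2*\<theta> - 1) * z x) = (\<lambda>x. \<theta>\<^sup>2 + (2*\<theta> - 1) * (z x - \<theta>))"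
    by (auto simp: algebra_simps)
  ultimately show ?thesis using mean by (simp add: integral_unique power2_eq_square algebra_simps)
qed

lemma integral_square_le_of_mean_zero:
  fixes z :: "real \<Rightarrow> real"
  assumes cont: "continuous_on {0..T} z" and T: "0 \<le> T" and mean: "integral {0..T} z = 0"
    and bounds: "\<And>x. x \<in> {0..T} \<Longrightarrow> \<theta> - 1 \<le> z x \<and> z x \<le> \<theta>"
  shows "integral {0..T} (\<lambda>x. (z x)\<^sup>2) \<le> T * (\<theta> * (1 - \<theta>))"
proof -
  have "integral {0..T} (\<lambda>x. (z x)\<^sup>2) \<le> integral {0..T} (\<lambda>x. \<theta>\<^sup>2 + (2*\<theta> - 1) * (z x - \<theta>))"
    using bounds square_le_chord
    by (intro integral_le integrable_continuous_real continuous_intros cont) auto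
  then show ?thesis using integral_chord_of_mean_zero[OF cont T mean] by simp
qed

lemma integral_square_ge_of_mean_zero:
  fixes z :: "real \<Rightarrow> real"
  assumes cont: "continuous_on {0..T} z" and T: "0 \<le> T" and mean: "integral {0..T} z = 0"
  shows "T * (\<theta> * (1 - \<theta>)) - integral {0..T} (\<lambda>x. chord_defect \<theta> (z x))
    \<le> integral {0..T} (\<lambda>x. (z x)\<^sup>2)"
proof -
  have int: "(\<lambda>x. \<theta>\<^sup>2 + (2*\<theta> - 1) * (z x - \<theta>)) integrable_on {0..T}"
    "(\<lambda>x. chord_defect \<theta> (z x)) integrable_on {0..T}"
    by (intro integrable_continuous_real continuous_intros cont)+
  have "integral {0..T} (\<lambda>x. \<theta>\<^sup>2 + (2*\<theta> - 1) * (z x - \<theta>) - chord_defect \<theta> (z x))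
      \<le> integral {0..T} (\<lambda>x. (z x)\<^sup>2)"
    using square_ge_chord_minus_defect
    by (intro integral_le integrable_continuous_real continuous_intros cont) auto
  then show ?thesis using integral_chord_of_mean_zero[OF cont T mean] int by (simp add: integral_diff)
qed

section \<open>The Gagliardo integral as an integral over shifts\<close>

lemma gagliardo_shift_form:
  fixes f :: "real \<Rightarrow> real"
  assumes [measurable]: "f \<in> borel_measurable borel"
  shows "(\<integral>\<^sup>+ x. (\<integral>\<^sup>+ y. ennreal (\<bar>f x - f y\<bar>\<^sup>2 / \<bar>x - y\<bar> powr p) \<partial>lborel) * indicator {0..T} x \<partial>lborel)
    = (\<integral>\<^sup>+ h. ennreal (1 / \<bar>h\<bar> powr p) *
         (\<integral>\<^sup>+ x. ennreal ((f (x + h) - f x)\<^sup>2) * indicator {0..T} x \<partial>lborel) \<partial>lborel)"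
proof -
  have inner: "(\<integral>\<^sup>+ y. ennreal (\<bar>f x - f y\<bar>\<^sup>2 / \<bar>x - y\<bar> powr p) \<partial>lborel)
      = (\<integral>\<^sup>+ h. ennreal (1 / \<bar>h\<bar> powr p) * ennreal ((f (x + h) - f x)\<^sup>2) \<partial>lborel)" for x
  proof -
    have "ennreal (\<bar>f x - f (x + h)\<bar>\<^sup>2 / \<bar>x - (x + h)\<bar> powr p)
        = ennreal (1 / \<bar>h\<bar> powr p) * ennreal ((f (x + h) - f x)\<^sup>2)" for h
      by (simp add: power2_commute ennreal_mult'[symmetric])
    then show ?thesis
      using nn_integral_real_affine[of "\<lambda>y. ennreal (\<bar>f x - f y\<bar>\<^sup>2 / \<bar>x - y\<bar> powr p)" 1 x] by simp
  qed
  have "(\<integral>\<^sup>+ x. (\<integral>\<^sup>+ y. ennreal (\<bar>f x - f y\<bar>\<^sup>2 / \<bar>x - y\<bar> powr p) \<partial>lborel) * indicator {0..T} x \<partial>lborel)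
     = (\<integral>\<^sup>+ x. (\<integral>\<^sup>+ h. ennreal (1 / \<bar>h\<bar> powr p) * ennreal ((f (x + h) - f x)\<^sup>2)
          * indicator {0..T} x \<partial>lborel) \<partial>lborel)"
    unfolding inner by (intro nn_integral_cong nn_integral_multc[symmetric]) measurable
  also have "\<dots> = (\<integral>\<^sup>+ h. (\<integral>\<^sup>+ x. ennreal (1 / \<bar>h\<bar> powr p) * ennreal ((f (x + h) - f x)\<^sup>2)
          * indicator {0..T} x \<partial>lborel) \<partial>lborel)"
    by (rule lborel_pair.Fubini'[symmetric]) measurable
  also have "\<dots> = (\<integral>\<^sup>+ h. ennreal (1 / \<bar>h\<bar> powr p) *
         (\<integral>\<^sup>+ x. ennreal ((f (x + h) - f x)\<^sup>2) * indicator {0..T} x \<partial>lborel) \<partial>lborel)"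
    by (simp add: nn_integral_cmult[symmetric] mult.assoc)
  finally show ?thesis .
qed

lemma nn_integral_powr_weight_rescale:
  fixes G :: "real \<Rightarrow> ennreal"
  assumes [measurable]: "G \<in> borel_measurable borel" and c: "c > 0"
  shows "(\<integral>\<^sup>+ h. ennreal (1 / \<bar>h\<bar> powr p) * G (h / c) \<partial>lborel)
       = ennreal (c powr (1 - p)) * (\<integral>\<^sup>+ k. ennreal (1 / \<bar>k\<bar> powr p) * G k \<partial>lborel)"
proof -
  have weight: "ennreal (1 / \<bar>c * k\<bar> powr p) = ennreal (c powr (- p)) * ennreal (1 / \<bar>k\<bar> powr p)" for k
    using c by (simp add: abs_mult powr_mult powr_minus ennreal_mult'[symmetric] divide_simps)
  have "(\<integral>\<^sup>+ h. ennreal (1 / \<bar>h\<bar> powr p) * G (h / c) \<partial>lborel)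
      = ennreal c * (\<integral>\<^sup>+ k. ennreal (c powr (- p)) * (ennreal (1 / \<bar>k\<bar> powr p) * G k) \<partial>lborel)"
    using nn_integral_real_affine[of "\<lambda>h. ennreal (1 / \<bar>h\<bar> powr p) * G (h / c)" c 0] c
    by (simp add: weight mult.assoc)
  also have "\<dots> = ennreal c * ennreal (c powr (- p)) * (\<integral>\<^sup>+ k. ennreal (1 / \<bar>k\<bar> powr p) * G k \<partial>lborel)"
    by (subst nn_integral_cmult) (measurable, simp add: mult.assoc)
  also have "ennreal c * ennreal (c powr (- p)) = ennreal (c powr (1 - p))"
    using c by (simp add: ennreal_mult'[symmetric] powr_diff powr_minus divide_simps)
  finally show ?thesis .
qed

section \<open>The shift energy of the fractional part\<close>

definition frac_shift_energy :: "real \<Rightarrow> real" where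
  "frac_shift_energy h = frac h * (1 - frac h)"

lemma frac_shift_energy_measurable [measurable]: "frac_shift_energy \<in> borel_measurable borel"
  unfolding frac_shift_energy_def frac_def by measurable

lemma nn_integral_frac_shift_square:
  "(\<integral>\<^sup>+ x. ennreal ((frac (x + h) - frac x)\<^sup>2) * indicator {0..1} x \<partial>lborel)
    = ennreal (frac_shift_energy h)"
proof -
  define \<theta> where "\<theta> = frac h"
  have th: "0 \<le> \<theta>" "\<theta> < 1" unfolding \<theta>_def by (auto simp: frac_lt_1)
  have frac_shift: "frac (x + h) = (if x + \<theta> < 1 then x + \<theta> else x + \<theta> - 1)" if "0 \<le> x" "x < 1" for x
    using that frac_add[of x h] unfolding \<theta>_def by simp
  have I1: "((\<lambda>x. (frac (x + h) - frac x)\<^sup>2) has_integral (1 - \<theta>) * \<theta>\<^sup>2) {0..1 - \<theta>}"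
  proof (rule has_integral_spike_finite[where S="{1 - \<theta>}"])
    fix x assume "x \<in> {0..1 - \<theta>} - {1 - \<theta>}"
    then have "0 \<le> x" "x + \<theta> < 1" "x < 1" using th by auto
    then show "(frac (x + h) - frac x)\<^sup>2 = \<theta>\<^sup>2" using frac_shift[of x] by (simp add: frac_eq)
  qed (use has_integral_const_real[of "\<theta>\<^sup>2" 0 "1 - \<theta>"] th in simp_all)
  have I2: "((\<lambda>x. (frac (x + h) - frac x)\<^sup>2) has_integral \<theta> * (1 - \<theta>)\<^sup>2) {1 - \<theta>..1}"
  proof (rule has_integral_spike_finite[where S="{1}"])
    fix x assume "x \<in> {1 - \<theta>..1} - {1}"
    then have "0 \<le> x" "x < 1" "\<not> x + \<theta> < 1" using th by auto
    then show "(frac (x + h) - frac x)\<^sup>2 = (1 - \<theta>)\<^sup>2" using frac_shift[of x] by (simp add: frac_eq power2_commute)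
  qed (use has_integral_const_real[of "(1 - \<theta>)\<^sup>2" "1 - \<theta>" 1] th in simp_all)
  have "((\<lambda>x. (frac (x + h) - frac x)\<^sup>2) has_integral ((1 - \<theta>) * \<theta>\<^sup>2 + \<theta> * (1 - \<theta>)\<^sup>2)) {0..1}"
    using has_integral_combine[OF _ _ I1 I2] th by simp
  moreover have "(1 - \<theta>) * \<theta>\<^sup>2 + \<theta> * (1 - \<theta>)\<^sup>2 = frac_shift_energy h"
    unfolding frac_shift_energy_def \<theta>_def by (simp add: power2_eq_square algebra_simps)
  ultimately show ?thesis by (intro nn_integral_has_integral_lebesgue') (auto simp: frac_shift_energy_def)
qed

lemma frac_shift_energy_le: "frac_shift_energy h \<le> min \<bar>h\<bar> 1"
proof -
  have f: "0 \<le> frac h" "frac h < 1" by (auto simp: frac_lt_1)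
  have "frac_shift_energy h \<le> 1" unfolding frac_shift_energy_def using f by (intro mult_le_one) auto
  moreover have "frac_shift_energy h \<le> \<bar>h\<bar>"
  proof (cases "\<bar>h\<bar> < 1")
    case small: True
    show ?thesis
    proof (cases "h \<ge> 0")
      case True
      then have "frac h = h" using small by (simp add: frac_eq)
      then show ?thesis using True unfolding frac_shift_energy_def by (simp add: mult_left_le)
    next
      case False
      then have "frac h = h + 1" using small by (subst frac_unique_iff) auto
      then show ?thesis using False small unfolding frac_shift_energy_def
        by (simp add: mult_le_cancel_right1)
    qed
  qed (use \<open>frac_shift_energy h \<le> 1\<close> in linarith)
  ultimately show ?thesis by simp
qed


definition frac_energy :: "real \<Rightarrow> ennreal" where
  "frac_energy p = (\<integral>\<^sup>+ h. ennreal (1 / \<bar>h\<bar> powr p) * ennreal (frac_shift_energy h) \<partial>lborel)"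

definition cutoff_energy :: "real \<Rightarrow> ennreal" where
  "cutoff_energy p = (\<integral>\<^sup>+ h. ennreal (1 / \<bar>h\<bar> powr p) * ennreal (min \<bar>h\<bar> 1) \<partial>lborel)"

lemma cutoff_energy_finite:
  assumes p: "1 < p" "p < 2"
  shows "cutoff_energy p < \<infinity>"
proof -
  define A where "A k = ennreal (k powr (1 - p)) * indicator {0..1} k
    + ennreal (k powr (- p)) * indicator {1..} k" for k :: real
  have [measurable]: "A \<in> borel_measurable borel" unfolding A_def by measurable
  have A0: "(\<integral>\<^sup>+ k. ennreal (k powr (1 - p)) * indicator {0..1} k \<partial>lborel) = ennreal (1 / (2 - p))"
    by (rule nn_integral_has_integral_lebesgue') (use has_integral_powr_from_0[of "1 - p" 1] p in auto)
  have A1: "(\<integral>\<^sup>+ k. ennreal (k powr (- p)) * indicator {1..} k \<partial>lborel) = ennreal (1 / (p - 1))"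
  proof (rule nn_integral_has_integral_lebesgue')
    have "- (1 / (- p + 1)) = 1 / (p - 1)" by (simp add: minus_divide_right)
    then show "((\<lambda>k. k powr (- p)) has_integral 1 / (p - 1)) {1..}"
      using has_integral_powr_to_inf[of "- p" 1] p by simp
  qed (use p in simp)
  have A_finite: "(\<integral>\<^sup>+ k. A k \<partial>lborel) < \<infinity>"
    unfolding A_def by (subst nn_integral_add) (measurable, simp_all add: A0 A1)
  have A_reflect: "(\<integral>\<^sup>+ k. A (- k) \<partial>lborel) = (\<integral>\<^sup>+ k. A k \<partial>lborel)"
    using nn_integral_real_affine[of A "-1" 0] by simp
  have "ennreal (1 / \<bar>k\<bar> powr p) * ennreal (min \<bar>k\<bar> 1) \<le> A k + A (- k)" for k
  proof -
    have "ennreal (1 / \<bar>k\<bar> powr p) * ennreal (min \<bar>k\<bar> 1) \<le> A \<bar>k\<bar>"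
    proof (cases "\<bar>k\<bar> \<le> 1")
      case True
      have "1 / \<bar>k\<bar> powr p * \<bar>k\<bar> = \<bar>k\<bar> powr (1 - p)" if "k \<noteq> 0"
        using that by (simp add: powr_diff divide_simps)
      then show ?thesis using True unfolding A_def
        by (cases "k = 0") (simp_all add: ennreal_mult'[symmetric] min_def)
    next
      case False
      then show ?thesis unfolding A_def by (simp add: min_def powr_minus_divide)
    qed
    also have "A \<bar>k\<bar> \<le> A k + A (- k)"
      by (cases "k \<ge> 0") (auto simp: add_increasing add_increasing2)
    finally show ?thesis .
  qed
  then have "(\<integral>\<^sup>+ k. ennreal (1 / \<bar>k\<bar> powr p) * ennreal (min \<bar>k\<bar> 1) \<partial>lborel)
      \<le> (\<integral>\<^sup>+ k. A k \<partial>lborel) + (\<integral>\<^sup>+ k. A (- k) \<partial>lborel)"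
    by (subst nn_integral_add[symmetric]) (measurable, rule nn_integral_mono)
  also have "\<dots> < \<infinity>" using A_finite A_reflect by (simp add: ennreal_add_less_top)
  finally show ?thesis unfolding cutoff_energy_def .
qed

lemma frac_energy_le_cutoff_energy: "frac_energy p \<le> cutoff_energy p"
  unfolding frac_energy_def cutoff_energy_def
  by (intro nn_integral_mono mult_left_mono ennreal_leI frac_shift_energy_le) simp

lemma frac_energy_finite:
  assumes "1 < p" "p < 2"
  shows "frac_energy p < \<infinity>"
  using frac_energy_le_cutoff_energy cutoff_energy_finite[OF assms] by (rule le_less_trans)

lemma gagliardo_frac_eq_frac_energy:
  "(\<integral>\<^sup>+ x. (\<integral>\<^sup>+ y. ennreal (\<bar>frac x - frac y\<bar>\<^sup>2 / \<bar>x - y\<bar> powr p) \<partial>lborel) * indicator {0..1} x \<partial>lborel)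
   = frac_energy p"
proof -
  have frac: "(frac :: real \<Rightarrow> real) \<in> borel_measurable borel"
    unfolding frac_def by measurable
  show ?thesis
    unfolding gagliardo_shift_form[OF frac] frac_energy_def
      nn_integral_frac_shift_square ..
qed

lemma Fs_shift_form:
  assumes [measurable]: "u \<in> borel_measurable borel" and T: "T > 0"
  shows "ennreal (2 * T) * Fs s T u = (\<integral>\<^sup>+ h. ennreal (1 / \<bar>h\<bar> powr (1 + 2 * s)) *
      (\<integral>\<^sup>+ x. ennreal ((u (x + h) - u x)\<^sup>2) * indicator {0..T} x \<partial>lborel) \<partial>lborel)"
proof -
  have "ennreal (2 * T) * ennreal (1 / (2 * T)) = 1"
    using T by (simp add: ennreal_mult'[symmetric])
  then show ?thesis
    unfolding Fs_def gagliardo_shift_form[OF assms(1)] by (simp add: mult.assoc[symmetric])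
qed

lemma nn_integral_weight_frac_shift_energy_rescale:
  assumes c: "c \<ge> 0" and P: "P > 0"
  shows "(\<integral>\<^sup>+ h. ennreal (1 / \<bar>h\<bar> powr p) * ennreal (c * frac_shift_energy (h / P)) \<partial>lborel)
    = ennreal (c * P powr (1 - p)) * frac_energy p"
proof -
  have "(\<integral>\<^sup>+ h. ennreal (1 / \<bar>h\<bar> powr p) * ennreal (c * frac_shift_energy (h / P)) \<partial>lborel)
     = (\<integral>\<^sup>+ h. ennreal c * (ennreal (1 / \<bar>h\<bar> powr p) * ennreal (frac_shift_energy (h / P))) \<partial>lborel)"
    using c by (simp add: ennreal_mult' mult.left_commute)
  also have "\<dots> = ennreal c * (\<integral>\<^sup>+ h. ennreal (1 / \<bar>h\<bar> powr p) * ennreal (frac_shift_energy (h / P)) \<partial>lborel)"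
    by (rule nn_integral_cmult) measurable
  also have "\<dots> = ennreal c * (ennreal (P powr (1 - p)) * frac_energy p)"
    unfolding frac_energy_def
    using nn_integral_powr_weight_rescale[of "\<lambda>k. ennreal (frac_shift_energy k)" P p] P by simp
  finally show ?thesis using c by (simp add: ennreal_mult' mult.assoc)
qed

lemma nn_integral_weight_min_rescale:
  assumes c: "c \<ge> 0" and \<delta>: "\<delta> > 0"
  shows "(\<integral>\<^sup>+ h. ennreal (1 / \<bar>h\<bar> powr p) * ennreal (c * min \<bar>h\<bar> \<delta>) \<partial>lborel)
    = ennreal (c * \<delta> powr (2 - p)) * cutoff_energy p"
proof -
  have "min \<bar>h\<bar> \<delta> = \<delta> * min \<bar>h / \<delta>\<bar> 1" for h
    using \<delta> by (auto simp: min_def abs_divide divide_le_eq)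
  then have "(\<integral>\<^sup>+ h. ennreal (1 / \<bar>h\<bar> powr p) * ennreal (c * min \<bar>h\<bar> \<delta>) \<partial>lborel)
     = (\<integral>\<^sup>+ h. ennreal (c * \<delta>) * (ennreal (1 / \<bar>h\<bar> powr p) * ennreal (min \<bar>h / \<delta>\<bar> 1)) \<partial>lborel)"
    using c \<delta> by (simp add: ennreal_mult' mult.left_commute mult.assoc)
  also have "\<dots> = ennreal (c * \<delta>) * (\<integral>\<^sup>+ h. ennreal (1 / \<bar>h\<bar> powr p) * ennreal (min \<bar>h / \<delta>\<bar> 1) \<partial>lborel)"
    by (rule nn_integral_cmult) measurable
  also have "\<dots> = ennreal (c * \<delta>) * (ennreal (\<delta> powr (1 - p)) * cutoff_energy p)"
    unfolding cutoff_energy_def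
    using nn_integral_powr_weight_rescale[of "\<lambda>k. ennreal (min \<bar>k\<bar> 1)" \<delta> p] \<delta> by simp
  also have "\<dots> = ennreal (c * \<delta> * \<delta> powr (1 - p)) * cutoff_energy p"
    using c \<delta> by (simp add: ennreal_mult' mult.assoc)
  also have "c * \<delta> * \<delta> powr (1 - p) = c * \<delta> powr (2 - p)"
    using \<delta> by (simp add: mult.assoc powr_mult_base)
  finally show ?thesis .
qed

lemma piecewise_affine_has_derivative:
  assumes "piecewise_affine u"
  obtains S where "\<And>a b. finite (S \<inter> {a..b})"
    and "\<And>t. t \<notin> S \<Longrightarrow> \<exists>m. (u has_real_derivative m) (at t)"
proof -
  obtain S where fin: "\<And>a b. finite (S \<inter> {a..b})"
    and aff: "\<And>x y. x \<le> y \<Longrightarrow> {x..y} \<inter> S = {} \<Longrightarrow> \<exists>m c. \<forall>t\<in>{x..y}. u t = m * t + c"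
    using assms unfolding piecewise_affine_def by blast
  have "\<exists>m. (u has_real_derivative m) (at t)" if t: "t \<notin> S" for t
  proof -
    have "open (- (S \<inter> {t - 1..t + 1}))" using fin[of "t - 1" "t + 1"] by (intro open_Compl finite_imp_closed)
    moreover have "t \<in> - (S \<inter> {t - 1..t + 1})" using t by auto
    ultimately obtain e where e: "e > 0" "ball t e \<subseteq> - (S \<inter> {t - 1..t + 1})"
      by (meson open_contains_ball)
    define r where "r = min (e / 2) (1 / 2)"
    have r: "r > 0" "r < e" "r < 1" using e unfolding r_def by auto
    have "{t - r..t + r} \<inter> S = {}"
    proof (rule ccontr)
      assume "{t - r..t + r} \<inter> S \<noteq> {}"
      then obtain y where y: "y \<in> S" "t - r \<le> y" "y \<le> t + r" by auto
      then have "y \<in> ball t e" using r by (auto simp: dist_real_def)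
      then show False using e y r by auto
    qed
    then obtain m c where mc: "\<forall>y\<in>{t - r..t + r}. u y = m * y + c"
      using aff[of "t - r" "t + r"] r by auto
    have "((\<lambda>y. m * y + c) has_real_derivative m) (at t)"
      by (auto intro!: derivative_eq_intros)
    then have "(u has_real_derivative m) (at t)"
      by (rule has_field_derivative_transform_within_open[where S="{t - r<..<t + r}"])
        (use r mc in auto)
    then show ?thesis by blast
  qed
  with fin show ?thesis using that by blast
qed

lemma AE_lborel_imp_negligible:
  assumes "AE x in lborel. P x"
  shows "negligible {x :: real. \<not> P x}"
proof -
  obtain N where N: "N \<in> null_sets lborel" "{x. \<not> P x} \<subseteq> N"
    using assms unfolding eventually_ae_filter by auto
  have "negligible N" using N(1) by (simp add: negligible_iff_null_sets null_sets_completionI)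
  then show ?thesis using N(2) negligible_subset by blast
qed

lemma piecewise_affine_fundamental_theorem:
  fixes u \<phi> :: "real \<Rightarrow> real"
  assumes cont: "continuous_on UNIV u" and pa: "piecewise_affine u"
    and deriv: "AE x in lborel. (u has_real_derivative \<phi> x) (at x)" and ab: "a \<le> b"
  shows "(\<phi> has_integral (u b - u a)) {a..b}"
proof -
  obtain S where fin: "\<And>a b. finite (S \<inter> {a..b})"
    and der: "\<And>t. t \<notin> S \<Longrightarrow> \<exists>m. (u has_real_derivative m) (at t)"
    using piecewise_affine_has_derivative[OF pa] by blast
  define u' where "u' t = (SOME m. (u has_real_derivative m) (at t))" for t
  have u': "(u has_real_derivative u' t) (at t)" if "t \<notin> S" for t
    unfolding u'_def using der[OF that] by (rule someI_ex)
  have "(u' has_integral (u b - u a)) {a..b}"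
  proof (rule fundamental_theorem_of_calculus_interior_strong[OF fin[of a b] ab])
    show "continuous_on {a..b} u" using cont by (rule continuous_on_subset) simp
  qed (use u' in \<open>auto simp: has_real_derivative_iff_has_vector_derivative\<close>)
  moreover have "negligible ({x. \<not> (u has_real_derivative \<phi> x) (at x)} \<union> S \<inter> {a..b})"
    using AE_lborel_imp_negligible[OF deriv] fin[of a b] by (simp add: negligible_finite)
  moreover have "\<phi> x = u' x"
    if "x \<in> {a..b} - ({x. \<not> (u has_real_derivative \<phi> x) (at x)} \<union> S \<inter> {a..b})" for x
    using that u' DERIV_unique by blast
  ultimately show ?thesis using has_integral_spike by blast
qed

lemma indicator_has_integral_measure:
  fixes A :: "real set"
  assumes [measurable]: "A \<in> sets borel"
  shows "((indicator A :: real \<Rightarrow> real) has_integral measure lborel (A \<inter> {a..b})) {a..b}"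
proof -
  have "emeasure lborel (A \<inter> {a..b}) \<le> emeasure lborel {a..b}" by (rule emeasure_mono) auto
  then have "emeasure lborel (A \<inter> {a..b}) < \<infinity>"
    by (simp add: emeasure_lborel_Icc_eq le_less_trans)
  then have "((\<lambda>x. 1::real) has_integral measure lborel (A \<inter> {a..b})) (A \<inter> {a..b})"
    by (intro has_integral_measure_lborel) auto
  then have "((\<lambda>x. if x \<in> A \<inter> {a..b} then 1::real else 0) has_integral measure lborel (A \<inter> {a..b})) {a..b}"
    by (subst has_integral_restrict) auto
  then show ?thesis by (rule has_integral_eq[rotated]) (auto simp: indicator_def)
qed

lemma interval_of_measure:
  fixes S :: "real set"
  assumes S: "is_interval S" and m: "emeasure lborel S = ennreal \<delta>" and \<delta>: "\<delta> > 0"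
  obtains a where "{a<..<a+\<delta>} \<subseteq> S" "S \<subseteq> {a..a+\<delta>}"
proof -
  have no_long: False if "{c..c + \<delta> + 1} \<subseteq> S" for c
  proof -
    have "ennreal (\<delta> + 1) \<le> emeasure lborel S"
      using that real_interval_borel_measurable[OF S] \<delta> emeasure_mono[OF that, of lborel] by simp
    then show False using m \<delta> by simp
  qed
  obtain a b where "S = {} \<or> S = UNIV \<or> S = {..<b} \<or> S = {..b} \<or> S = {a<..} \<or> S = {a..} \<or>
    S = {a<..<b} \<or> S = {a<..b} \<or> S = {a..<b} \<or> S = {a..b}"
    using is_real_interval[OF S] by blast
  then consider "S = {}" | "S = UNIV \<or> S = {..<b} \<or> S = {..b}" | "S = {a<..} \<or> S = {a..}"
    | "S = {a<..<b} \<or> S = {a<..b} \<or> S = {a..<b} \<or> S = {a..b}" by meson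
  then show ?thesis
  proof cases
    case 1
    then show ?thesis using m \<delta> by simp
  next
    case 2
    then have "{b - \<delta> - 2..b - \<delta> - 2 + \<delta> + 1} \<subseteq> S" by auto
    then show ?thesis using no_long by blast
  next
    case 3
    then have "{a + 1..a + 1 + \<delta> + 1} \<subseteq> S" by auto
    then show ?thesis using no_long by blast
  next
    case 4
    have "a \<le> b"
    proof (rule ccontr)
      assume "\<not> a \<le> b"
      then have "S = {}" using 4 by auto
      then show False using m \<delta> by simp
    qed
    then have "emeasure lborel S = ennreal (b - a)" using 4 by auto
    then have "b = a + \<delta>" using m \<delta> \<open>a \<le> b\<close> by simp
    then show ?thesis using 4 by (intro that[of a]) auto
  qed
qed

section \<open>Admissible functions\<close>

locale admissible_fun =
  fixes u :: "real \<Rightarrow> real" and T \<Lambda> \<delta> :: real and I :: "nat \<Rightarrow> real set"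
  assumes delta_pos: "\<delta> > 0" and Lambda_eq: "\<Lambda> = 1 / \<delta>" and T_pos: "T > 0"
    and cont: "continuous_on UNIV u" and periodic: "\<And>x. u (x + T) = u x"
    and piecewise: "piecewise_affine u"
    and I_interval: "\<And>k. is_interval (I k)" and I_measure: "\<And>k. emeasure lborel (I k) = ennreal \<delta>"
    and I_overlap: "\<And>i j. i \<noteq> j \<Longrightarrow> finite (I i \<inter> I j) \<and> card (I i \<inter> I j) \<le> 1"
    and AE_deriv: "AE x in lborel. (u has_real_derivative (if x \<in> (\<Union>k. I k) then - \<Lambda> else 1)) (at x)"

lemma admissibleE:
  assumes "u \<in> admissible T \<Lambda> \<delta>" "\<delta> > 0" "\<Lambda> = 1 / \<delta>" "T > 0"
  obtains I where "admissible_fun u T \<Lambda> \<delta> I"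
  using assms unfolding admissible_def admissible_fun_def by blast

context admissible_fun
begin

definition descent :: "real set" where "descent = (\<Union>k. I k)"

definition descent_interior :: "real set" where "descent_interior = (\<Union>k. interior (I k))"

lemma I_borel [measurable]: "I k \<in> sets borel"
  by (rule real_interval_borel_measurable[OF I_interval])

lemma descent_borel [measurable]: "descent \<in> sets borel"
  unfolding descent_def by measurable

lemma descent_interior_borel [measurable]: "descent_interior \<in> sets borel"
  unfolding descent_interior_def by (intro borel_open open_UN) auto

lemma descent_interior_subset: "descent_interior \<subseteq> descent"
  unfolding descent_interior_def descent_def using interior_subset by blast

lemma one_plus_delta: "(\<Lambda> + 1) * \<delta> = 1 + \<delta>"
  using delta_pos Lambda_eq by (simp add: field_simps)

lemma continuous_on_shift: "continuous_on S (\<lambda>x. u (x + h))"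
  by (rule continuous_on_compose2[OF cont]) (auto intro: continuous_intros)

lemma increment_eq:
  assumes "a \<le> b"
  shows "u b - u a = (b - a) - (\<Lambda> + 1) * measure lborel (descent \<inter> {a..b})"
proof -
  have "((\<lambda>x. if x \<in> descent then - \<Lambda> else 1) has_integral (u b - u a)) {a..b}"
    unfolding descent_def by (rule piecewise_affine_fundamental_theorem[OF cont piecewise AE_deriv assms])
  moreover have "((\<lambda>x. 1 - (\<Lambda> + 1) * indicator descent x) has_integral
      (b - a) - (\<Lambda> + 1) * measure lborel (descent \<inter> {a..b})) {a..b}"
    using has_integral_const_real[of "1::real" a b] assms
    by (intro has_integral_diff has_integral_mult_right indicator_has_integral_measure) auto
  moreover have "(\<lambda>x. if x \<in> descent then - \<Lambda> else 1) = (\<lambda>x. 1 - (\<Lambda> + 1) * indicator descent x)"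
    by (auto simp: indicator_def)
  ultimately show ?thesis using has_integral_unique by metis
qed

lemma measure_descent_period: "measure lborel (descent \<inter> {a..a+T}) = T / (\<Lambda> + 1)"
proof -
  have "\<Lambda> + 1 > 0" using delta_pos Lambda_eq by (simp add: add_pos_pos)
  then show ?thesis using increment_eq[of a "a + T"] periodic[of a] T_pos by (simp add: field_simps)
qed

lemma measure_descent_interior_period_le: "measure lborel (descent_interior \<inter> {a..a+T}) \<le> T / (\<Lambda> + 1)"
proof -
  have "descent \<inter> {a..a+T} \<in> fmeasurable lborel"
    by (rule fmeasurableI2[of "{a..a+T}"]) (auto intro: fmeasurableI simp: emeasure_lborel_Icc_eq)
  then have "measure lborel (descent_interior \<inter> {a..a+T}) \<le> measure lborel (descent \<inter> {a..a+T})"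
    using descent_interior_subset by (intro measure_mono_fmeasurable) auto
  then show ?thesis using measure_descent_period by simp
qed

lemma I_subset_or_null:
  assumes a: "a \<notin> descent_interior" and b: "b \<notin> descent_interior"
  shows "I k \<subseteq> {a..b} \<or> emeasure lborel (I k \<inter> {a..b}) = 0"
proof -
  obtain l where l: "{l<..<l+\<delta>} \<subseteq> I k" "I k \<subseteq> {l..l+\<delta>}"
    using interval_of_measure[OF I_interval I_measure delta_pos] .
  have "{l<..<l+\<delta>} \<subseteq> descent_interior"
    using interior_maximal[OF l(1) open_greaterThanLessThan] unfolding descent_interior_def by blast
  then have "a \<notin> {l<..<l+\<delta>}" "b \<notin> {l<..<l+\<delta>}" using a b by auto
  then consider "l + \<delta> \<le> a" | "b \<le> l" | "a \<le> l" "l + \<delta> \<le> b" by force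
  then show ?thesis
  proof cases
    case 1
    then have "emeasure lborel (I k \<inter> {a..b}) \<le> emeasure lborel {a}"
      using l(2) by (intro emeasure_mono) fastforce+
    then show ?thesis by simp
  next
    case 2
    then have "emeasure lborel (I k \<inter> {a..b}) \<le> emeasure lborel {b}"
      using l(2) by (intro emeasure_mono) fastforce+
    then show ?thesis by simp
  next
    case 3
    then show ?thesis using l(2) by auto
  qed
qed

text \<open>The pairwise intersections of the \<open>I k\<close> form a countable, hence null, set.\<close>

lemma emeasure_descent_Int:
  assumes [measurable]: "A \<in> sets borel"
  shows "emeasure lborel (descent \<inter> A) = (\<Sum>k. emeasure lborel (I k \<inter> A))"
proof -
  define D where "D = (\<Union>i. \<Union>j\<in>{j. j \<noteq> i}. I i \<inter> I j)"
  have "countable D"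
    unfolding D_def
  proof (intro countable_UN)
    fix i j :: nat assume "j \<in> {j. j \<noteq> i}"
    then show "countable (I i \<inter> I j)" using I_overlap[of i j] by (auto intro: countable_finite)
  qed simp_all
  then have D: "D \<in> null_sets lborel" by (rule countable_imp_null_set_lborel)
  define J where "J k = I k \<inter> A - D" for k
  have disj: "disjoint_family J" unfolding disjoint_family_on_def J_def D_def by blast
  have "(\<Sum>k. emeasure lborel (J k)) = emeasure lborel (\<Union>k. J k)"
    using D by (intro suminf_emeasure[OF _ disj]) (auto simp: J_def)
  moreover have "emeasure lborel (J k) = emeasure lborel (I k \<inter> A)" for k
    unfolding J_def using D by (intro emeasure_Diff_null_set) auto
  moreover have "(\<Union>k. J k) = descent \<inter> A - D" unfolding J_def descent_def by blast
  moreover have "emeasure lborel (descent \<inter> A - D) = emeasure lborel (descent \<inter> A)"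
    using D by (intro emeasure_Diff_null_set) auto
  ultimately show ?thesis by simp
qed

lemma measure_descent_multiple:
  assumes ab: "a \<le> b" and a: "a \<notin> descent_interior" and b: "b \<notin> descent_interior"
  obtains n :: nat where "measure lborel (descent \<inter> {a..b}) = real n * \<delta>"
proof -
  define K where "K = {k. I k \<subseteq> {a..b}}"
  define f where "f k = (if k \<in> K then ennreal \<delta> else 0)" for k
  have "emeasure lborel (I k \<inter> {a..b}) = f k" for k
    using I_subset_or_null[OF a b, of k] I_measure[of k] unfolding K_def f_def
    by (auto simp: Int_absorb2)
  then have sum: "emeasure lborel (descent \<inter> {a..b}) = (\<Sum>k. f k)"
    using emeasure_descent_Int[of "{a..b}"] by simp
  have sum_f: "sum f F = ennreal (real (card F) * \<delta>)" if "F \<subseteq> K" for F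
    using that delta_pos unfolding f_def
    by (simp add: subset_eq ennreal_of_nat_eq_real_of_nat ennreal_mult')
  have "finite K"
  proof (rule ccontr)
    assume "infinite K"
    define n where "n = nat \<lceil>(b - a) / \<delta>\<rceil> + 1"
    obtain F where F: "finite F" "card F = n" "F \<subseteq> K"
      using infinite_arbitrarily_large[OF \<open>infinite K\<close>] by blast
    have "ennreal (real n * \<delta>) = sum f F" using sum_f F by simp
    also have "\<dots> \<le> (\<Sum>k. f k)" by (rule sum_le_suminf) (auto simp: F(1))
    also have "\<dots> \<le> emeasure lborel {a..b}" unfolding sum[symmetric] by (intro emeasure_mono) auto
    finally have "real n * \<delta> \<le> b - a" using ab by (simp add: ennreal_le_iff)
    moreover have "(b - a) / \<delta> < real n" unfolding n_def by linarith
    ultimately show False using delta_pos by (simp add: divide_less_eq)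
  qed
  then have "(\<Sum>k. f k) = ennreal (real (card K) * \<delta>)"
    using sum_f[of K] by (subst suminf_finite[of K]) (auto simp: f_def)
  then have "measure lborel (descent \<inter> {a..b}) = real (card K) * \<delta>"
    using sum delta_pos by (simp add: measure_def)
  then show ?thesis using that by blast
qed

lemma increment_minus_frac_Ints:
  assumes "x \<notin> descent_interior" "x + h \<notin> descent_interior"
  shows "(u (x + h) - u x) / (1 + \<delta>) - frac (h / (1 + \<delta>)) \<in> \<int>"
proof -
  have descent_step: "(\<Lambda> + 1) * (real n * \<delta>) = real n * (1 + \<delta>)" for n
    by (simp add: one_plus_delta[symmetric] mult_ac)
  have "\<exists>j::int. u (x + h) - u x = h + of_int j * (1 + \<delta>)"
  proof (cases "h \<ge> 0")
    case True
    then obtain n where "measure lborel (descent \<inter> {x..x + h}) = real n * \<delta>"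
      using measure_descent_multiple[of x "x + h"] assms by auto
    then have "u (x + h) - u x = h + of_int (- int n) * (1 + \<delta>)"
      using increment_eq[of x "x + h"] True descent_step by simp
    then show ?thesis by blast
  next
    case False
    then obtain n where "measure lborel (descent \<inter> {x + h..x}) = real n * \<delta>"
      using measure_descent_multiple[of "x + h" x] assms by auto
    then have "u (x + h) - u x = h + of_int (int n) * (1 + \<delta>)"
      using increment_eq[of "x + h" x] False descent_step by simp
    then show ?thesis by blast
  qed
  then obtain j :: int where j: "u (x + h) - u x = h + of_int j * (1 + \<delta>)" by blast
  have "(u (x + h) - u x) / (1 + \<delta>) - frac (h / (1 + \<delta>)) = of_int (\<lfloor>h / (1 + \<delta>)\<rfloor> + j)"
    using delta_pos unfolding j frac_def by (simp add: add_divide_distrib)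
  then show ?thesis by (metis Ints_of_int)
qed

lemma integral_increment_eq_0: "integral {0..T} (\<lambda>x. u (x + h) - u x) = 0"
proof -
  have "integral {0..T} (\<lambda>x. u (x + h)) = integral {0..T} (u \<circ> ((+) h))"
    by (simp add: o_def add.commute)
  also have "\<dots> = integral {h..h + T} u" by (simp add: integral_shift_Icc_real add.commute)
  also have "\<dots> = integral {0..T} u" by (rule integral_periodic_translate[OF cont periodic T_pos])
  finally show ?thesis
    by (subst integral_diff) (auto intro!: integrable_continuous_real continuous_on_shift
        continuous_on_subset[OF cont])
qed

lemma integral_chord_defect_increment_le:
  "integral {0..T} (\<lambda>x. chord_defect (frac (h / (1 + \<delta>))) ((u (x + h) - u x) / (1 + \<delta>)))
    \<le> T * \<delta> / (2 * (1 + \<delta>))"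
proof -
  define e where "e x = chord_defect (frac (h / (1 + \<delta>))) ((u (x + h) - u x) / (1 + \<delta>))" for x
  have e_le: "e x \<le> 1/4 * (indicator descent_interior x + indicator descent_interior (h + x))" for x
  proof (cases "x \<in> descent_interior \<or> x + h \<in> descent_interior")
    case True
    then have "1/4 \<le> 1/4 * (indicator descent_interior x + indicator descent_interior (h + x) :: real)"
      by (auto simp: indicator_def add.commute)
    then show ?thesis unfolding e_def using chord_defect_le_quarter by (rule order_trans[rotated])
  next
    case False
    then show ?thesis using increment_minus_frac_Ints[of x h]
      unfolding e_def by (simp add: chord_defect_eq_0_Ints indicator_def add.commute)
  qed
  have "continuous_on {0..T} e"
    unfolding e_def using delta_pos
    by (intro continuous_intros continuous_on_shift continuous_on_subset[OF cont]) auto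
  then have e_int: "e integrable_on {0..T}" by (rule integrable_continuous_real)
  have "((indicator descent_interior \<circ> (+) h :: real \<Rightarrow> real) has_integral
      measure lborel (descent_interior \<inter> {h..h+T})) {0..T}"
    using indicator_has_integral_measure[of descent_interior h "h + T"]
    by (simp add: has_integral_shift_Icc_real add.commute)
  then have "((\<lambda>x. 1/4 * (indicator descent_interior x + indicator descent_interior (h + x)) :: real)
      has_integral 1/4 * (measure lborel (descent_interior \<inter> {0..T})
        + measure lborel (descent_interior \<inter> {h..h+T}))) {0..T}"
    using indicator_has_integral_measure[of descent_interior 0 T]
    by (intro has_integral_mult_right has_integral_add) (simp_all add: o_def)
  then have "integral {0..T} e \<le> 1/4 * (measure lborel (descent_interior \<inter> {0..0+T})
      + measure lborel (descent_interior \<inter> {h..h+T}))"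
    using e_le by (intro has_integral_le[OF integrable_integral[OF e_int]]) auto
  also have "\<dots> \<le> 1/4 * (T / (\<Lambda> + 1) + T / (\<Lambda> + 1))"
    using measure_descent_interior_period_le[of 0] measure_descent_interior_period_le[of h]
    by (intro mult_left_mono add_mono) auto
  also have "\<dots> = T * \<delta> / (2 * (1 + \<delta>))"
  proof -
    have "T / (\<Lambda> + 1) = T * \<delta> / (1 + \<delta>)" using delta_pos unfolding Lambda_eq by (simp add: field_simps)
    then show ?thesis by simp
  qed
  finally show ?thesis unfolding e_def .
qed

lemma continuous_on_scaled_increment:
  "continuous_on S (\<lambda>x. (u (x + h) - u x) / (1 + \<delta>))"
  using delta_pos by (intro continuous_intros continuous_on_shift continuous_on_subset[OF cont]) auto

lemma integral_scaled_increment_eq_0: "integral {0..T} (\<lambda>x. (u (x + h) - u x) / (1 + \<delta>)) = 0"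
  using integral_increment_eq_0[of h] by (simp add: integral_divide)

lemma integral_increment_square_eq:
  "integral {0..T} (\<lambda>x. (u (x + h) - u x)\<^sup>2)
    = (1 + \<delta>)\<^sup>2 * integral {0..T} (\<lambda>x. ((u (x + h) - u x) / (1 + \<delta>))\<^sup>2)"
  using delta_pos by (simp add: power_divide)

lemma nn_integral_increment_square:
  "(\<integral>\<^sup>+ x. ennreal ((u (x + h) - u x)\<^sup>2) * indicator {0..T} x \<partial>lborel)
    = ennreal (integral {0..T} (\<lambda>x. (u (x + h) - u x)\<^sup>2))"
  by (intro nn_integral_has_integral_lebesgue' integrable_integral integrable_continuous_real
      continuous_intros continuous_on_shift continuous_on_subset[OF cont]) auto

lemma integral_increment_square_ge:
  "T * (1 + \<delta>)\<^sup>2 * (frac_shift_energy (h / (1 + \<delta>)) - \<delta>)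
    \<le> integral {0..T} (\<lambda>x. (u (x + h) - u x)\<^sup>2)"
proof -
  define P where "P = 1 + \<delta>"
  have P: "P \<ge> 1" using delta_pos unfolding P_def by simp
  have "T * frac_shift_energy (h / P)
      - integral {0..T} (\<lambda>x. chord_defect (frac (h / P)) ((u (x + h) - u x) / P))
      \<le> integral {0..T} (\<lambda>x. ((u (x + h) - u x) / P)\<^sup>2)"
    unfolding P_def frac_shift_energy_def using T_pos
    by (intro integral_square_ge_of_mean_zero continuous_on_scaled_increment
        integral_scaled_increment_eq_0) simp
  then have "T * frac_shift_energy (h / P) - T * \<delta> / (2 * P)
      \<le> integral {0..T} (\<lambda>x. ((u (x + h) - u x) / P)\<^sup>2)"
    using integral_chord_defect_increment_le[of h] unfolding P_def by linarith
  then have "P\<^sup>2 * (T * frac_shift_energy (h / P) - T * \<delta> / (2 * P))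
      \<le> P\<^sup>2 * integral {0..T} (\<lambda>x. ((u (x + h) - u x) / P)\<^sup>2)"
    by (rule mult_left_mono) simp
  also have "\<dots> = integral {0..T} (\<lambda>x. (u (x + h) - u x)\<^sup>2)"
    unfolding P_def by (rule integral_increment_square_eq[symmetric])
  finally have "P\<^sup>2 * (T * frac_shift_energy (h / P) - T * \<delta> / (2 * P))
      \<le> integral {0..T} (\<lambda>x. (u (x + h) - u x)\<^sup>2)" .
  moreover have "T * P * \<delta> / 2 \<le> T * P\<^sup>2 * \<delta>"
    using P T_pos delta_pos by (simp add: power2_eq_square mult_left_mono)
  then have "T * P\<^sup>2 * (frac_shift_energy (h / P) - \<delta>)
      \<le> P\<^sup>2 * (T * frac_shift_energy (h / P) - T * \<delta> / (2 * P))"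
    using P by (simp add: power2_eq_square field_simps)
  ultimately show ?thesis unfolding P_def by linarith
qed

lemma shift_energy_lower:
  "ennreal (T * (1 + \<delta>)\<^sup>2 * frac_shift_energy (h / (1 + \<delta>)))
    \<le> (\<integral>\<^sup>+ x. ennreal ((u (x + h) - u x)\<^sup>2) * indicator {0..T} x \<partial>lborel)
      + ennreal (T * (1 + \<delta>)\<^sup>2 * min \<bar>h\<bar> \<delta>)"
proof -
  define G where "G = integral {0..T} (\<lambda>x. (u (x + h) - u x)\<^sup>2)"
  have G: "0 \<le> G" unfolding G_def
    by (intro integral_nonneg integrable_continuous_real continuous_intros continuous_on_shift
        continuous_on_subset[OF cont]) auto
  have "T * (1 + \<delta>)\<^sup>2 * frac_shift_energy (h / (1 + \<delta>)) \<le> G + T * (1 + \<delta>)\<^sup>2 * min \<bar>h\<bar> \<delta>"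
  proof (cases "\<bar>h\<bar> \<le> \<delta>")
    case True
    have "frac_shift_energy (h / (1 + \<delta>)) \<le> \<bar>h / (1 + \<delta>)\<bar>"
      using frac_shift_energy_le[of "h / (1 + \<delta>)"] by simp
    also have "\<dots> \<le> \<bar>h\<bar>" using delta_pos by (simp add: abs_divide divide_le_eq mult_le_cancel_left1)
    finally have "T * (1 + \<delta>)\<^sup>2 * frac_shift_energy (h / (1 + \<delta>)) \<le> T * (1 + \<delta>)\<^sup>2 * \<bar>h\<bar>"
      using T_pos by (intro mult_left_mono) auto
    with True G show ?thesis by (simp add: min_def)
  next
    case False
    then show ?thesis using integral_increment_square_ge[of h] unfolding G_def
      by (simp add: min_def algebra_simps)
  qed
  then have "ennreal (T * (1 + \<delta>)\<^sup>2 * frac_shift_energy (h / (1 + \<delta>)))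
      \<le> ennreal (G + T * (1 + \<delta>)\<^sup>2 * min \<bar>h\<bar> \<delta>)"
    by (rule ennreal_leI)
  also have "\<dots> = ennreal G + ennreal (T * (1 + \<delta>)\<^sup>2 * min \<bar>h\<bar> \<delta>)"
    using G T_pos delta_pos by (intro ennreal_plus) auto
  finally show ?thesis unfolding nn_integral_increment_square G_def[symmetric] .
qed

lemma shift_energy_upper:
  assumes bounds: "\<And>x. frac (h / (1 + \<delta>)) - 1 \<le> (u (x + h) - u x) / (1 + \<delta>)
    \<and> (u (x + h) - u x) / (1 + \<delta>) \<le> frac (h / (1 + \<delta>))"
  shows "(\<integral>\<^sup>+ x. ennreal ((u (x + h) - u x)\<^sup>2) * indicator {0..T} x \<partial>lborel)
    \<le> ennreal (T * (1 + \<delta>)\<^sup>2 * frac_shift_energy (h / (1 + \<delta>)))"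
proof -
  have "integral {0..T} (\<lambda>x. ((u (x + h) - u x) / (1 + \<delta>))\<^sup>2) \<le> T * frac_shift_energy (h / (1 + \<delta>))"
    unfolding frac_shift_energy_def using T_pos bounds
    by (intro integral_square_le_of_mean_zero continuous_on_scaled_increment
        integral_scaled_increment_eq_0) auto
  then have "(1 + \<delta>)\<^sup>2 * integral {0..T} (\<lambda>x. ((u (x + h) - u x) / (1 + \<delta>))\<^sup>2)
      \<le> (1 + \<delta>)\<^sup>2 * (T * frac_shift_energy (h / (1 + \<delta>)))"
    by (rule mult_left_mono) simp
  then have "integral {0..T} (\<lambda>x. (u (x + h) - u x)\<^sup>2) \<le> T * (1 + \<delta>)\<^sup>2 * frac_shift_energy (h / (1 + \<delta>))"
    unfolding integral_increment_square_eq by (simp add: mult_ac)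
  then show ?thesis unfolding nn_integral_increment_square by (rule ennreal_leI)
qed

lemma Fs_lower:
  fixes s :: real
  defines "p \<equiv> 1 + 2 * s"
  shows "ennreal (T * (1 + \<delta>)\<^sup>2 * (1 + \<delta>) powr (1 - p)) * frac_energy p
    \<le> ennreal (2 * T) * Fs s T u + ennreal (T * (1 + \<delta>)\<^sup>2 * \<delta> powr (2 - p)) * cutoff_energy p"
proof -
  have meas [measurable]: "u \<in> borel_measurable borel"
    using cont by (simp add: borel_measurable_continuous_onI)
  define c where "c = T * (1 + \<delta>)\<^sup>2"
  have c: "c \<ge> 0" unfolding c_def using T_pos by simp
  have "ennreal (c * (1 + \<delta>) powr (1 - p)) * frac_energy p
      = (\<integral>\<^sup>+ h. ennreal (1 / \<bar>h\<bar> powr p) * ennreal (c * frac_shift_energy (h / (1 + \<delta>))) \<partial>lborel)"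
    using nn_integral_weight_frac_shift_energy_rescale[OF c] delta_pos by simp
  also have "\<dots> \<le> (\<integral>\<^sup>+ h. ennreal (1 / \<bar>h\<bar> powr p) *
        (\<integral>\<^sup>+ x. ennreal ((u (x + h) - u x)\<^sup>2) * indicator {0..T} x \<partial>lborel)
      + ennreal (1 / \<bar>h\<bar> powr p) * ennreal (c * min \<bar>h\<bar> \<delta>) \<partial>lborel)"
    using shift_energy_lower unfolding c_def
    by (intro nn_integral_mono) (simp add: distrib_left[symmetric] mult_left_mono)
  also have "\<dots> = (\<integral>\<^sup>+ h. ennreal (1 / \<bar>h\<bar> powr p) *
        (\<integral>\<^sup>+ x. ennreal ((u (x + h) - u x)\<^sup>2) * indicator {0..T} x \<partial>lborel) \<partial>lborel)
      + (\<integral>\<^sup>+ h. ennreal (1 / \<bar>h\<bar> powr p) * ennreal (c * min \<bar>h\<bar> \<delta>) \<partial>lborel)"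
    by (rule nn_integral_add) measurable
  also have "\<dots> = ennreal (2 * T) * Fs s T u + ennreal (c * \<delta> powr (2 - p)) * cutoff_energy p"
    unfolding p_def Fs_shift_form[OF meas T_pos] nn_integral_weight_min_rescale[OF c delta_pos] ..
  finally show ?thesis unfolding c_def .
qed

lemma Fs_upper:
  fixes s :: real
  defines "p \<equiv> 1 + 2 * s"
  assumes bounds: "\<And>x h. frac (h / (1 + \<delta>)) - 1 \<le> (u (x + h) - u x) / (1 + \<delta>)
    \<and> (u (x + h) - u x) / (1 + \<delta>) \<le> frac (h / (1 + \<delta>))"
  shows "ennreal (2 * T) * Fs s T u \<le> ennreal (T * (1 + \<delta>)\<^sup>2 * (1 + \<delta>) powr (1 - p)) * frac_energy p"
proof -
  have meas [measurable]: "u \<in> borel_measurable borel"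
    using cont by (simp add: borel_measurable_continuous_onI)
  have c: "T * (1 + \<delta>)\<^sup>2 \<ge> 0" using T_pos by simp
  have "ennreal (2 * T) * Fs s T u \<le> (\<integral>\<^sup>+ h. ennreal (1 / \<bar>h\<bar> powr p) *
      ennreal (T * (1 + \<delta>)\<^sup>2 * frac_shift_energy (h / (1 + \<delta>))) \<partial>lborel)"
    unfolding p_def Fs_shift_form[OF meas T_pos]
    by (intro nn_integral_mono mult_left_mono shift_energy_upper bounds) simp
  also have "\<dots> = ennreal (T * (1 + \<delta>)\<^sup>2 * (1 + \<delta>) powr (1 - p)) * frac_energy p"
    using nn_integral_weight_frac_shift_energy_rescale[OF c] delta_pos by simp
  finally show ?thesis .
qed

end

section \<open>The sawtooth competitor\<close>

text \<open>A tooth rises with slope \<open>1\<close> on \<open>[0, 1]\<close> and falls with slope \<open>-1/\<delta>\<close> on \<open>[1, 1 + \<delta>]\<close>.\<close>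

definition sawtooth_tooth :: "real \<Rightarrow> real \<Rightarrow> real" where
  "sawtooth_tooth \<delta> t = min t ((1 + \<delta> - t) / \<delta>)"

definition sawtooth :: "real \<Rightarrow> real \<Rightarrow> real" where
  "sawtooth \<delta> x = sawtooth_tooth \<delta> (x - (1 + \<delta>) * of_int \<lfloor>x / (1 + \<delta>)\<rfloor>)"

text \<open>The falling pieces, enumerated through \<open>int_decode\<close> because admissibility indexes them by \<open>\<nat>\<close>.\<close>

definition sawtooth_descent :: "real \<Rightarrow> nat \<Rightarrow> real set" where
  "sawtooth_descent \<delta> k =
    {of_int (int_decode k) * (1 + \<delta>) + 1 .. of_int (int_decode k) * (1 + \<delta>) + (1 + \<delta>)}"

definition sawtooth_breaks :: "real \<Rightarrow> real set" where
  "sawtooth_breaks \<delta> = range (\<lambda>k::int. of_int k * (1 + \<delta>)) \<union> range (\<lambda>k::int. of_int k * (1 + \<delta>) + 1)"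

lemma finite_arithmetic_progression_Int_Icc:
  fixes P c a b :: real
  assumes "P > 0"
  shows "finite {k :: int. c + of_int k * P \<in> {a..b}}"
proof (rule finite_subset)
  show "{k :: int. c + of_int k * P \<in> {a..b}} \<subseteq> {\<lfloor>(a - c) / P\<rfloor>..\<lceil>(b - c) / P\<rceil>}"
  proof
    fix k assume "k \<in> {k :: int. c + of_int k * P \<in> {a..b}}"
    then have "(a - c) / P \<le> of_int k" "of_int k \<le> (b - c) / P"
      using assms by (auto simp: divide_le_eq le_divide_eq algebra_simps)
    then show "k \<in> {\<lfloor>(a - c) / P\<rfloor>..\<lceil>(b - c) / P\<rceil>}"
      using floor_mono ceiling_mono by fastforce
  qed
qed simp

context
  fixes \<delta> :: real
  assumes delta_pos: "\<delta> > 0"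
begin

lemma sawtooth_tooth_0: "sawtooth_tooth \<delta> 0 = 0"
  using delta_pos unfolding sawtooth_tooth_def by (simp add: min_def)

lemma sawtooth_tooth_period: "sawtooth_tooth \<delta> (1 + \<delta>) = 0"
  using delta_pos unfolding sawtooth_tooth_def by (simp add: min_def)

lemma sawtooth_tooth_rising:
  assumes "0 \<le> t" "t \<le> 1"
  shows "sawtooth_tooth \<delta> t = t"
proof -
  have "t * \<delta> \<le> 1 * \<delta>" using assms delta_pos by (intro mult_right_mono) auto
  then have "t * \<delta> \<le> 1 + \<delta> - t" using assms by linarith
  then have "t \<le> (1 + \<delta> - t) / \<delta>" using delta_pos by (simp add: le_divide_eq)
  then show ?thesis unfolding sawtooth_tooth_def by (simp add: min_absorb1)
qed

lemma sawtooth_tooth_falling: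
  assumes "1 \<le> t" "t \<le> 1 + \<delta>"
  shows "sawtooth_tooth \<delta> t = (1 + \<delta> - t) / \<delta>"
proof -
  have "1 * \<delta> \<le> t * \<delta>" using assms delta_pos by (intro mult_right_mono) auto
  then have "1 + \<delta> - t \<le> t * \<delta>" using assms by linarith
  then have "(1 + \<delta> - t) / \<delta> \<le> t" using delta_pos by (simp add: divide_le_eq)
  then show ?thesis unfolding sawtooth_tooth_def by (simp add: min_absorb2)
qed

lemma sawtooth_eq_tooth:
  assumes "of_int k * (1 + \<delta>) \<le> x" "x \<le> of_int k * (1 + \<delta>) + (1 + \<delta>)"
  shows "sawtooth \<delta> x = sawtooth_tooth \<delta> (x - of_int k * (1 + \<delta>))"
proof (cases "x < of_int k * (1 + \<delta>) + (1 + \<delta>)")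
  case True
  then show ?thesis unfolding sawtooth_def using floor_divide_eq[of "1 + \<delta>" k x] assms(1) delta_pos
    by (simp add: mult.commute)
next
  case False
  then have x: "x = of_int (k + 1) * (1 + \<delta>)" using assms by (simp add: algebra_simps)
  have "\<lfloor>x / (1 + \<delta>)\<rfloor> = k + 1" using delta_pos x by simp
  then have "sawtooth \<delta> x = sawtooth_tooth \<delta> 0" unfolding sawtooth_def
    using x by (simp add: mult.commute)
  also have "\<dots> = sawtooth_tooth \<delta> (x - of_int k * (1 + \<delta>))"
    using x sawtooth_tooth_0 sawtooth_tooth_period by (simp add: algebra_simps)
  finally show ?thesis .
qed

lemma sawtooth_tooth_increment_le:
  assumes "0 \<le> t1" "t1 \<le> t2" "t2 \<le> 1 + \<delta>"
  shows "sawtooth_tooth \<delta> t2 - sawtooth_tooth \<delta> t1 \<le> t2 - t1"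
      "sawtooth_tooth \<delta> t1 - sawtooth_tooth \<delta> t2 \<le> (t2 - t1) / \<delta>"
proof -
  have a: "(1 + \<delta> - t2) / \<delta> \<le> (1 + \<delta> - t1) / \<delta>" using assms delta_pos by (simp add: divide_right_mono)
  show "sawtooth_tooth \<delta> t2 - sawtooth_tooth \<delta> t1 \<le> t2 - t1"
    unfolding sawtooth_tooth_def using a assms by (auto simp: min_def)
  have b: "(1 + \<delta> - t1) / \<delta> - (1 + \<delta> - t2) / \<delta> = (t2 - t1) / \<delta>"
    using delta_pos by (simp add: field_simps)
  have c: "0 \<le> (t2 - t1) / \<delta>" using assms delta_pos by simp
  show "sawtooth_tooth \<delta> t1 - sawtooth_tooth \<delta> t2 \<le> (t2 - t1) / \<delta>"
    unfolding sawtooth_tooth_def using a b c assms by (auto simp: min_def)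
qed

lemma sawtooth_increment_le:
  assumes ab: "a \<le> b"
  shows "sawtooth \<delta> b - sawtooth \<delta> a \<le> b - a" "sawtooth \<delta> a - sawtooth \<delta> b \<le> (b - a) / \<delta>"
proof -
  define P where "P = 1 + \<delta>"
  have P: "P > 0" using delta_pos unfolding P_def by simp
  define ka where "ka = \<lfloor>a / P\<rfloor>"
  define kb where "kb = \<lfloor>b / P\<rfloor>"
  have ca: "of_int ka * P \<le> a" "a < of_int ka * P + P"
    using floor_divide_bounds[of P a] P unfolding ka_def by auto
  have cb: "of_int kb * P \<le> b" "b < of_int kb * P + P"
    using floor_divide_bounds[of P b] P unfolding kb_def by auto
  have "ka \<le> kb" unfolding ka_def kb_def using ab P by (intro floor_mono divide_right_mono) auto
  then consider "ka = kb" | "ka < kb" by linarith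
  then have "sawtooth \<delta> b - sawtooth \<delta> a \<le> b - a \<and> sawtooth \<delta> a - sawtooth \<delta> b \<le> (b - a) / \<delta>"
  proof cases
    case 1
    have "sawtooth \<delta> a = sawtooth_tooth \<delta> (a - of_int ka * P)"
      using sawtooth_eq_tooth[of ka a] ca unfolding P_def by simp
    moreover have "sawtooth \<delta> b = sawtooth_tooth \<delta> (b - of_int ka * P)"
      using sawtooth_eq_tooth[of ka b] cb 1 unfolding P_def by simp
    ultimately show ?thesis
      using sawtooth_tooth_increment_le[of "a - of_int ka * P" "b - of_int ka * P"] ca cb 1 ab
      unfolding P_def by auto
  next
    case 2
    then have "of_int (ka + 1) * P \<le> of_int kb * P" using P by (intro mult_right_mono) auto
    then have le: "of_int ka * P + P \<le> of_int kb * P" by (simp add: algebra_simps)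
    have va: "sawtooth \<delta> a = sawtooth_tooth \<delta> (a - of_int ka * P)"
      using sawtooth_eq_tooth[of ka a] ca unfolding P_def by simp
    have vb: "sawtooth \<delta> b = sawtooth_tooth \<delta> (b - of_int kb * P)"
      using sawtooth_eq_tooth[of kb b] cb unfolding P_def by simp
    have m1: "sawtooth_tooth \<delta> P - sawtooth_tooth \<delta> (a - of_int ka * P) \<le> P - (a - of_int ka * P)"
      "sawtooth_tooth \<delta> (a - of_int ka * P) - sawtooth_tooth \<delta> P \<le> (P - (a - of_int ka * P)) / \<delta>"
      using sawtooth_tooth_increment_le[of "a - of_int ka * P" P] ca unfolding P_def by auto
    have m2: "sawtooth_tooth \<delta> (b - of_int kb * P) - sawtooth_tooth \<delta> 0 \<le> b - of_int kb * P"
      "sawtooth_tooth \<delta> 0 - sawtooth_tooth \<delta> (b - of_int kb * P) \<le> (b - of_int kb * P) / \<delta>"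
      using sawtooth_tooth_increment_le[of 0 "b - of_int kb * P"] cb unfolding P_def by auto
    have z: "sawtooth_tooth \<delta> P = 0" "sawtooth_tooth \<delta> 0 = 0"
      using sawtooth_tooth_period sawtooth_tooth_0 unfolding P_def by auto
    have "sawtooth \<delta> b - sawtooth \<delta> a \<le> b - of_int kb * P + (P - (a - of_int ka * P))"
      using m1(1) m2(1) z va vb by simp
    also have "\<dots> \<le> b - a" using le by simp
    finally have r1: "sawtooth \<delta> b - sawtooth \<delta> a \<le> b - a" .
    have "sawtooth \<delta> a - sawtooth \<delta> b \<le> (P - (a - of_int ka * P)) / \<delta> + (b - of_int kb * P) / \<delta>"
      using m1(2) m2(2) z va vb by simp
    also have "\<dots> = ((P - (a - of_int ka * P)) + (b - of_int kb * P)) / \<delta>" by (simp add: add_divide_distrib)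
    also have "\<dots> \<le> (b - a) / \<delta>" using le delta_pos by (intro divide_right_mono) auto
    finally show ?thesis using r1 by simp
  qed
  then show "sawtooth \<delta> b - sawtooth \<delta> a \<le> b - a" "sawtooth \<delta> a - sawtooth \<delta> b \<le> (b - a) / \<delta>" by auto
qed

lemma continuous_on_sawtooth: "continuous_on UNIV (sawtooth \<delta>)"
proof -
  have "\<bar>sawtooth \<delta> x - sawtooth \<delta> y\<bar> \<le> (1 + 1 / \<delta>) * \<bar>x - y\<bar>" for x y
  proof -
    have "\<bar>sawtooth \<delta> b - sawtooth \<delta> a\<bar> \<le> (1 + 1 / \<delta>) * (b - a)" if "a \<le> b" for a b
    proof -
      have "b - a \<le> (1 + 1/\<delta>) * (b - a)" "(b - a) / \<delta> \<le> (1 + 1/\<delta>) * (b - a)"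
        using that delta_pos by (simp_all add: algebra_simps)
      then show ?thesis using sawtooth_increment_le[OF that] by (simp add: abs_le_iff)
    qed
    from this[of x y] this[of y x] show ?thesis by (cases "x \<le> y") (auto simp: abs_minus_commute)
  qed
  then have "(1 + 1 / \<delta>)-lipschitz_on UNIV (sawtooth \<delta>)"
    using delta_pos by (intro lipschitz_onI) (auto simp: dist_real_def)
  then show ?thesis by (rule lipschitz_on_continuous_on)
qed

lemma sawtooth_periodic: "sawtooth \<delta> (x + (1 + \<delta>)) = sawtooth \<delta> x"
proof -
  have "\<lfloor>(x + (1 + \<delta>)) / (1 + \<delta>)\<rfloor> = \<lfloor>x / (1 + \<delta>)\<rfloor> + 1"
    using delta_pos by (simp add: add_divide_distrib)
  then show ?thesis unfolding sawtooth_def by (simp add: algebra_simps)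
qed

lemma finite_sawtooth_breaks_Int: "finite (sawtooth_breaks \<delta> \<inter> {a..b})"
proof -
  have "sawtooth_breaks \<delta> \<inter> {a..b} \<subseteq>
      (\<lambda>k. 0 + of_int k * (1 + \<delta>)) ` {k. 0 + of_int k * (1 + \<delta>) \<in> {a..b}}
      \<union> (\<lambda>k. 1 + of_int k * (1 + \<delta>)) ` {k. 1 + of_int k * (1 + \<delta>) \<in> {a..b}}"
    unfolding sawtooth_breaks_def by (auto simp: add.commute)
  moreover have "finite ((\<lambda>k. 0 + of_int k * (1 + \<delta>)) ` {k. 0 + of_int k * (1 + \<delta>) \<in> {a..b}}
      \<union> (\<lambda>k. 1 + of_int k * (1 + \<delta>)) ` {k. 1 + of_int k * (1 + \<delta>) \<in> {a..b}})"
    using finite_arithmetic_progression_Int_Icc[of "1 + \<delta>" 0 a b]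
      finite_arithmetic_progression_Int_Icc[of "1 + \<delta>" 1 a b] delta_pos by simp
  ultimately show ?thesis by (rule finite_subset)
qed

lemma sawtooth_rising:
  assumes "of_int k * (1 + \<delta>) \<le> y" "y \<le> of_int k * (1 + \<delta>) + 1"
  shows "sawtooth \<delta> y = y - of_int k * (1 + \<delta>)"
  using sawtooth_eq_tooth[of k y] sawtooth_tooth_rising[of "y - of_int k * (1 + \<delta>)"] assms delta_pos
  by simp

lemma sawtooth_falling:
  assumes "of_int k * (1 + \<delta>) + 1 \<le> y" "y \<le> of_int k * (1 + \<delta>) + (1 + \<delta>)"
  shows "sawtooth \<delta> y = (of_int k * (1 + \<delta>) + (1 + \<delta>) - y) / \<delta>"
  using sawtooth_eq_tooth[of k y] sawtooth_tooth_falling[of "y - of_int k * (1 + \<delta>)"] assms delta_pos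
  by (simp add: algebra_simps)

lemma piecewise_affine_sawtooth: "piecewise_affine (sawtooth \<delta>)"
  unfolding piecewise_affine_def
proof (intro exI[of _ "sawtooth_breaks \<delta>"] conjI allI impI)
  show "finite (sawtooth_breaks \<delta> \<inter> {a..b})" for a b by (rule finite_sawtooth_breaks_Int)
  fix x y assume dis: "{x..y} \<inter> sawtooth_breaks \<delta> = {}"
  define k where "k = \<lfloor>x / (1 + \<delta>)\<rfloor>"
  define c where "c = of_int k * (1 + \<delta>)"
  have cx: "c \<le> x" "x < c + (1 + \<delta>)"
    using floor_divide_bounds[of "1 + \<delta>" x] delta_pos unfolding c_def k_def by auto
  have breaks: "c + (1 + \<delta>) \<in> sawtooth_breaks \<delta>" "c + 1 \<in> sawtooth_breaks \<delta>"
    unfolding sawtooth_breaks_def c_def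
    by (rule UnI1, rule range_eqI[of _ _ "k + 1"], simp add: algebra_simps) (rule UnI2, rule rangeI)
  have "y < c + (1 + \<delta>)"
  proof (rule ccontr)
    assume "\<not> y < c + (1 + \<delta>)"
    then have "c + (1 + \<delta>) \<in> {x..y}" using cx by auto
    then show False using dis breaks by blast
  qed
  moreover have "c + 1 \<notin> {x..y}" using dis breaks by blast
  ultimately consider "y < c + 1" | "c + 1 < x" "y < c + (1 + \<delta>)" by force
  then show "\<exists>m c. \<forall>t\<in>{x..y}. sawtooth \<delta> t = m * t + c"
  proof cases
    case 1
    then have "\<forall>t\<in>{x..y}. sawtooth \<delta> t = 1 * t + - c"
      using sawtooth_rising[of k, folded c_def] cx by auto
    then show ?thesis by blast
  next
    case 2
    then have "\<forall>t\<in>{x..y}. sawtooth \<delta> t = (- 1 / \<delta>) * t + (c + (1 + \<delta>)) / \<delta>"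
      using sawtooth_falling[of k, folded c_def] delta_pos by (auto simp: diff_divide_distrib)
    then show ?thesis by blast
  qed
qed

lemma sawtooth_descent_interval:
  shows "is_interval (sawtooth_descent \<delta> k)" "emeasure lborel (sawtooth_descent \<delta> k) = ennreal \<delta>"
  unfolding sawtooth_descent_def using delta_pos by (auto simp: is_interval_cc)

lemma sawtooth_descent_disjoint:
  assumes "i \<noteq> j" shows "sawtooth_descent \<delta> i \<inter> sawtooth_descent \<delta> j = {}"
proof -
  define P where "P = 1 + \<delta>"
  have P: "P > 1" using delta_pos unfolding P_def by simp
  have ne: "int_decode i \<noteq> int_decode j" using assms inj_int_decode[of UNIV] by (auto dest: injD)
  have key: "of_int z1 * P + P < of_int z2 * P + 1" if "z1 < z2" for z1 z2 :: int
  proof -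
    have "z1 + 1 \<le> z2" using that by simp
    then have "of_int (z1 + 1) * P \<le> of_int z2 * P"
      using P by (intro mult_right_mono) (auto simp del: of_int_add)
    then show ?thesis by (simp add: algebra_simps)
  qed
  show ?thesis
  proof (cases "int_decode i < int_decode j")
    case True
    show ?thesis using key[OF True] unfolding sawtooth_descent_def P_def by auto
  next
    case False
    then have "int_decode j < int_decode i" using ne by simp
    from key[OF this] show ?thesis unfolding sawtooth_descent_def P_def by auto
  qed
qed

lemma mem_sawtooth_descent_iff:
  assumes x: "x \<notin> sawtooth_breaks \<delta>"
  shows "x \<in> (\<Union>k. sawtooth_descent \<delta> k) \<longleftrightarrow> of_int \<lfloor>x / (1 + \<delta>)\<rfloor> * (1 + \<delta>) + 1 < x"
proof
  assume "x \<in> (\<Union>k. sawtooth_descent \<delta> k)"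
  then obtain z where z: "of_int z * (1 + \<delta>) + 1 \<le> x" "x \<le> of_int z * (1 + \<delta>) + (1 + \<delta>)"
    unfolding sawtooth_descent_def by auto
  have "of_int z * (1 + \<delta>) + 1 \<in> sawtooth_breaks \<delta>" "of_int z * (1 + \<delta>) + (1 + \<delta>) \<in> sawtooth_breaks \<delta>"
    unfolding sawtooth_breaks_def
    by (rule UnI2, rule rangeI) (rule UnI1, rule range_eqI[of _ _ "z + 1"], simp add: algebra_simps)
  then have "of_int z * (1 + \<delta>) + 1 < x" "x < of_int z * (1 + \<delta>) + (1 + \<delta>)"
    using x z by (auto simp: le_less)
  moreover have "\<lfloor>x / (1 + \<delta>)\<rfloor> = z"
    using floor_divide_eq[of "1 + \<delta>" z x] delta_pos calculation z by simp
  ultimately show "of_int \<lfloor>x / (1 + \<delta>)\<rfloor> * (1 + \<delta>) + 1 < x" by simp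
next
  assume "of_int \<lfloor>x / (1 + \<delta>)\<rfloor> * (1 + \<delta>) + 1 < x"
  then have "x \<in> sawtooth_descent \<delta> (int_encode \<lfloor>x / (1 + \<delta>)\<rfloor>)"
    using floor_divide_bounds[of "1 + \<delta>" x] delta_pos unfolding sawtooth_descent_def by auto
  then show "x \<in> (\<Union>k. sawtooth_descent \<delta> k)" by blast
qed

lemma sawtooth_has_derivative:
  assumes x: "x \<notin> sawtooth_breaks \<delta>"
  shows "(sawtooth \<delta> has_real_derivative (if x \<in> (\<Union>k. sawtooth_descent \<delta> k) then - (1 / \<delta>) else 1))
    (at x)"
proof -
  define k where "k = \<lfloor>x / (1 + \<delta>)\<rfloor>"
  define c where "c = of_int k * (1 + \<delta>)"
  have cx: "c \<le> x" "x < c + (1 + \<delta>)"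
    using floor_divide_bounds[of "1 + \<delta>" x] delta_pos unfolding c_def k_def by auto
  have "c \<in> sawtooth_breaks \<delta>" "c + 1 \<in> sawtooth_breaks \<delta>"
    unfolding sawtooth_breaks_def c_def by (rule UnI1, rule rangeI) (rule UnI2, rule rangeI)
  then have "x \<noteq> c" "x \<noteq> c + 1" using x by auto
  then consider "c < x" "x < c + 1" | "c + 1 < x" using cx by linarith
  then show ?thesis
  proof cases
    case 1
    have "((\<lambda>y. y - c) has_real_derivative 1) (at x)" by (auto intro!: derivative_eq_intros)
    then have "(sawtooth \<delta> has_real_derivative 1) (at x)"
      by (rule has_field_derivative_transform_within_open[where S="{c<..<c + 1}"])
        (use 1 sawtooth_rising[of k, folded c_def] in auto)
    then show ?thesis using mem_sawtooth_descent_iff[OF x] 1 unfolding c_def k_def by simp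
  next
    case 2
    have "((\<lambda>y. (c + (1 + \<delta>) - y) / \<delta>) has_real_derivative - (1 / \<delta>)) (at x)"
      using delta_pos by (auto intro!: derivative_eq_intros)
    then have "(sawtooth \<delta> has_real_derivative - (1 / \<delta>)) (at x)"
      by (rule has_field_derivative_transform_within_open[where S="{c + 1<..<c + (1 + \<delta>)}"])
        (use 2 cx sawtooth_falling[of k, folded c_def] in auto)
    then show ?thesis using mem_sawtooth_descent_iff[OF x] 2 unfolding c_def k_def by simp
  qed
qed

lemma sawtooth_admissible: "sawtooth \<delta> \<in> admissible (real L * (1 / \<delta> + 1) * \<delta>) (1 / \<delta>) \<delta>"
proof -
  have period: "real L * (1 / \<delta> + 1) * \<delta> = real L * (1 + \<delta>)" using delta_pos by (simp add: field_simps)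
  have per: "sawtooth \<delta> (x + real L * (1 / \<delta> + 1) * \<delta>) = sawtooth \<delta> x" for x
    unfolding period by (rule periodic_add_nat_mult[where f="sawtooth \<delta>", OF sawtooth_periodic])
  have AE_deriv: "AE x in lborel.
      (sawtooth \<delta> has_real_derivative (if x \<in> (\<Union>k. sawtooth_descent \<delta> k) then - (1 / \<delta>) else 1)) (at x)"
  proof (rule AE_I')
    show "sawtooth_breaks \<delta> \<in> null_sets lborel"
      unfolding sawtooth_breaks_def by (intro countable_imp_null_set_lborel) simp
    show "{x \<in> space lborel. \<not> (sawtooth \<delta> has_real_derivative
        (if x \<in> (\<Union>k. sawtooth_descent \<delta> k) then - (1 / \<delta>) else 1)) (at x)} \<subseteq> sawtooth_breaks \<delta>"
      using sawtooth_has_derivative by blast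
  qed
  show ?thesis
    unfolding admissible_def
    using continuous_on_sawtooth per piecewise_affine_sawtooth sawtooth_descent_interval
      sawtooth_descent_disjoint AE_deriv
    by (intro CollectI conjI allI impI exI[of _ "sawtooth_descent \<delta>"]) auto
qed

lemma sawtooth_increment_bounds:
  "frac (h / (1 + \<delta>)) - 1 \<le> (sawtooth \<delta> (x + h) - sawtooth \<delta> x) / (1 + \<delta>)
    \<and> (sawtooth \<delta> (x + h) - sawtooth \<delta> x) / (1 + \<delta>) \<le> frac (h / (1 + \<delta>))"
proof -
  define P where "P = 1 + \<delta>"
  have P: "P \<ge> 1" using delta_pos unfolding P_def by simp
  define \<theta> where "\<theta> = frac (h / P)"
  have th: "0 \<le> \<theta>" "\<theta> < 1" unfolding \<theta>_def by (auto simp: frac_lt_1)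
  have "h = x + \<theta> * P + of_int \<lfloor>h / P\<rfloor> * P - x"
    unfolding \<theta>_def frac_def using P by (simp add: algebra_simps)
  then have shift: "sawtooth \<delta> (x + h) = sawtooth \<delta> (x + \<theta> * P)"
    using periodic_add_int_mult[where f="sawtooth \<delta>" and T=P, OF sawtooth_periodic[folded P_def]]
    by (metis add.commute diff_add_cancel)
  have t0: "0 \<le> \<theta> * P" "\<theta> * P \<le> P" using th P by (auto intro: mult_left_le_one_le)
  have "sawtooth \<delta> (x + \<theta> * P) - sawtooth \<delta> x \<le> \<theta> * P"
    using sawtooth_increment_le(1)[of x "x + \<theta> * P"] t0 by simp
  moreover have "sawtooth \<delta> (x + P) - sawtooth \<delta> (x + \<theta> * P) \<le> P - \<theta> * P"
    using sawtooth_increment_le(1)[of "x + \<theta> * P" "x + P"] t0 by simp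
  moreover have "sawtooth \<delta> (x + P) = sawtooth \<delta> x" using sawtooth_periodic unfolding P_def .
  ultimately have "\<theta> * P - P \<le> sawtooth \<delta> (x + h) - sawtooth \<delta> x" "sawtooth \<delta> (x + h) - sawtooth \<delta> x \<le> \<theta> * P"
    using shift by auto
  then show ?thesis unfolding P_def[symmetric] \<theta>_def[symmetric] using P
    by (auto simp: divide_le_eq le_divide_eq algebra_simps)
qed

end

lemma Fs_sawtooth_le:
  assumes \<delta>: "\<delta> > 0" and L: "1 \<le> L" and T: "T = real L * (1 / \<delta> + 1) * \<delta>"
  shows "ennreal (2 * T) * Fs s T (sawtooth \<delta>)
    \<le> ennreal (T * (1 + \<delta>)\<^sup>2 * (1 + \<delta>) powr (1 - (1 + 2 * s))) * frac_energy (1 + 2 * s)"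
proof -
  have "T > 0" using T \<delta> L by (simp add: add_pos_pos)
  then obtain I where "admissible_fun (sawtooth \<delta>) T (1 / \<delta>) \<delta> I"
    using admissibleE[OF sawtooth_admissible[OF \<delta>, of L, folded T] \<delta>] by blast
  then show ?thesis using admissible_fun.Fs_upper sawtooth_increment_bounds[OF \<delta>] by blast
qed

section \<open>Convergence of the minimal energies\<close>

lemma Fs_minimizer_bounds:
  fixes s \<delta> T :: real and L :: nat and u :: "real \<Rightarrow> real"
  assumes s: "0 < s" "s < 1/2" and \<delta>: "\<delta> > 0" and L: "1 \<le> L"
    and T: "T = real L * (1 / \<delta> + 1) * \<delta>"
    and u_adm: "u \<in> admissible T (1 / \<delta>) \<delta>"
    and u_min: "\<And>v. v \<in> admissible T (1 / \<delta>) \<delta> \<Longrightarrow> Fs s T u \<le> Fs s T v"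
  defines "J \<equiv> enn2real (frac_energy (1 + 2 * s))" and "C \<equiv> enn2real (cutoff_energy (1 + 2 * s))"
  shows "Fs s T u = ennreal (enn2real (Fs s T u))"
    and "(1 + \<delta>)\<^sup>2 * (1 + \<delta>) powr (- 2 * s) * J / 2 - (1 + \<delta>)\<^sup>2 * \<delta> powr (1 - 2 * s) * C / 2
      \<le> enn2real (Fs s T u)"
    and "enn2real (Fs s T u) \<le> (1 + \<delta>)\<^sup>2 * (1 + \<delta>) powr (- 2 * s) * J / 2"
proof -
  define p where "p = 1 + 2 * s"
  have p: "1 < p" "p < 2" unfolding p_def using s by auto
  have C_eq: "cutoff_energy p = ennreal C"
    using cutoff_energy_finite[OF p] unfolding C_def p_def by (simp add: ennreal_enn2real_if)
  have J_eq: "frac_energy p = ennreal J"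
    using frac_energy_finite[OF p] unfolding J_def p_def by (simp add: ennreal_enn2real_if)
  have T_pos: "T > 0" using T \<delta> L by (simp add: add_pos_pos)
  define K where "K = T * (1 + \<delta>)\<^sup>2 * (1 + \<delta>) powr (- 2 * s)"
  define E where "E = T * (1 + \<delta>)\<^sup>2 * \<delta> powr (1 - 2 * s)"
  have KE: "0 \<le> K" "0 \<le> E" "0 \<le> J" "0 \<le> C" unfolding K_def E_def J_def C_def using T_pos by auto
  obtain I where adm: "admissible_fun u T (1 / \<delta>) \<delta> I"
    using admissibleE[OF u_adm \<delta> _ T_pos] by blast
  have "ennreal (2 * T) * Fs s T u \<le> ennreal (2 * T) * Fs s T (sawtooth \<delta>)"
    using u_min[OF sawtooth_admissible[OF \<delta>, of L, folded T]] by (rule mult_left_mono) simp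
  also have "\<dots> \<le> ennreal (K * J)"
    using Fs_sawtooth_le[OF \<delta> L T, of s] KE unfolding J_eq[unfolded p_def] K_def
    by (simp add: ennreal_mult')
  finally have upper: "ennreal (2 * T) * Fs s T u \<le> ennreal (K * J)" .
  then have "ennreal (2 * T) * Fs s T u < \<infinity>" by (rule le_less_trans) simp
  then have "Fs s T u < \<infinity>" using T_pos by (auto simp: ennreal_mult_less_top)
  then show F: "Fs s T u = ennreal (enn2real (Fs s T u))" by (simp add: ennreal_enn2real_if)
  define a where "a = enn2real (Fs s T u)"
  have a: "0 \<le> a" unfolding a_def by simp
  have "ennreal (2 * T * a) \<le> ennreal (K * J)"
    using upper T_pos unfolding F[folded a_def] by (simp add: ennreal_mult')
  then have "2 * T * a \<le> K * J" using KE by (simp add: ennreal_le_iff)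
  then show "a \<le> (1 + \<delta>)\<^sup>2 * (1 + \<delta>) powr (- 2 * s) * J / 2"
    using T_pos unfolding K_def by (simp add: field_simps)
  have "ennreal (K * J) = ennreal K * frac_energy p" unfolding J_eq using KE by (simp add: ennreal_mult)
  also have "\<dots> \<le> ennreal (2 * T) * Fs s T u + ennreal E * cutoff_energy p"
  proof -
    have "\<delta> powr (2 - (1 + 2 * s)) = \<delta> powr (1 - 2 * s)" by (simp add: algebra_simps)
    then show ?thesis using admissible_fun.Fs_lower[OF adm, of s]
      unfolding K_def E_def p_def by simp
  qed
  also have "\<dots> = ennreal (2 * T * a + E * C)"
    unfolding F[folded a_def] C_eq using T_pos a KE by (simp add: ennreal_plus ennreal_mult)
  finally have "K * J \<le> 2 * T * a + E * C"
    using KE a T_pos by (subst (asm) ennreal_le_iff) auto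
  then have "T * ((1 + \<delta>)\<^sup>2 * (1 + \<delta>) powr (- 2 * s) * J)
      \<le> T * (2 * a + (1 + \<delta>)\<^sup>2 * \<delta> powr (1 - 2 * s) * C)"
    unfolding K_def E_def by (simp add: algebra_simps)
  then have "(1 + \<delta>)\<^sup>2 * (1 + \<delta>) powr (- 2 * s) * J \<le> 2 * a + (1 + \<delta>)\<^sup>2 * \<delta> powr (1 - 2 * s) * C"
    using T_pos by (rule mult_left_le_imp_le)
  then show "(1 + \<delta>)\<^sup>2 * (1 + \<delta>) powr (- 2 * s) * J / 2 - (1 + \<delta>)\<^sup>2 * \<delta> powr (1 - 2 * s) * C / 2 \<le> a"
    by simp
qed

lemma minimizer_bounds_tendsto:
  fixes \<delta> :: "nat \<Rightarrow> real"
  assumes \<delta>_pos: "\<And>n. 0 < \<delta> n" and \<delta>_lim: "\<delta> \<longlonglongrightarrow> 0" and s: "s < 1/2"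
  shows "(\<lambda>n. (1 + \<delta> n)\<^sup>2 * (1 + \<delta> n) powr (- 2 * s) * J / 2) \<longlonglongrightarrow> J / 2"
    and "(\<lambda>n. (1 + \<delta> n)\<^sup>2 * (1 + \<delta> n) powr (- 2 * s) * J / 2
      - (1 + \<delta> n)\<^sup>2 * \<delta> n powr (1 - 2 * s) * C / 2) \<longlonglongrightarrow> J / 2"
proof -
  have P: "(\<lambda>n. 1 + \<delta> n) \<longlonglongrightarrow> 1" using tendsto_add[OF tendsto_const \<delta>_lim, of 1] by simp
  have "(\<lambda>n. (1 + \<delta> n)\<^sup>2 * (1 + \<delta> n) powr (- 2 * s) * J / 2) \<longlonglongrightarrow> 1\<^sup>2 * 1 powr (- 2 * s) * J / 2"
    by (intro tendsto_divide tendsto_mult tendsto_power tendsto_powr P tendsto_const) simp_all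
  then show upper: "(\<lambda>n. (1 + \<delta> n)\<^sup>2 * (1 + \<delta> n) powr (- 2 * s) * J / 2) \<longlonglongrightarrow> J / 2"
    by simp
  have \<delta>_powr: "(\<lambda>n. \<delta> n powr (1 - 2 * s)) \<longlonglongrightarrow> 0"
    using \<delta>_pos s
    by (intro tendsto_zero_powrI[OF \<delta>_lim tendsto_const]) (auto intro!: always_eventually less_imp_le)
  have lower: "(\<lambda>n. (1 + \<delta> n)\<^sup>2 * \<delta> n powr (1 - 2 * s) * C / 2) \<longlonglongrightarrow> 1\<^sup>2 * 0 * C / 2"
    by (intro tendsto_divide tendsto_mult tendsto_power P \<delta>_powr tendsto_const) simp_all
  show "(\<lambda>n. (1 + \<delta> n)\<^sup>2 * (1 + \<delta> n) powr (- 2 * s) * J / 2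
      - (1 + \<delta> n)\<^sup>2 * \<delta> n powr (1 - 2 * s) * C / 2) \<longlonglongrightarrow> J / 2"
    using tendsto_diff[OF upper lower] by simp
qed

theorem proposition1p4:
  fixes s :: real
    and \<delta> \<Lambda> T :: "nat \<Rightarrow> real"
    and L :: "nat \<Rightarrow> nat"
    and u :: "nat \<Rightarrow> real \<Rightarrow> real"
  assumes s_pos: "0 < s" and s_lt: "s < 1 / 2"
    and \<delta>_pos: "\<And>n. 0 < \<delta> n"
    and \<delta>_lim: "\<delta> \<longlonglongrightarrow> 0"
    and \<Lambda>_def: "\<And>n. \<Lambda> n = 1 / \<delta> n"
    and L_pos: "\<And>n. 1 \<le> L n"
    and T_def: "\<And>n. T n = real (L n) * (\<Lambda> n + 1) * \<delta> n"
    and u_adm: "\<And>n. u n \<in> admissible (T n) (\<Lambda> n) (\<delta> n)"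
    and u_min: "\<And>n v. v \<in> admissible (T n) (\<Lambda> n) (\<delta> n) \<Longrightarrow> Fs s (T n) (u n) \<le> Fs s (T n) v"
  shows "(\<lambda>n. Fs s (T n) (u n)) \<longlonglongrightarrow>
    ennreal (1 / 2) * (\<integral>\<^sup>+ x. (\<integral>\<^sup>+ y. ennreal (\<bar>frac x - frac y\<bar>\<^sup>2 / \<bar>x - y\<bar> powr (1 + 2 * s)) \<partial>lborel)
        * indicator {0..1} x \<partial>lborel)"
proof -
  define J where "J = enn2real (frac_energy (1 + 2 * s))"
  define C where "C = enn2real (cutoff_energy (1 + 2 * s))"
  define a where "a n = enn2real (Fs s (T n) (u n))" for n
  note bounds = Fs_minimizer_bounds[OF s_pos s_lt \<delta>_pos L_pos T_def[unfolded \<Lambda>_def]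
      u_adm[unfolded \<Lambda>_def] u_min[unfolded \<Lambda>_def], folded J_def C_def a_def]
  have "a \<longlonglongrightarrow> J / 2"
    by (rule tendsto_sandwich[OF _ _ minimizer_bounds_tendsto(2)[OF \<delta>_pos \<delta>_lim s_lt, of J C]
          minimizer_bounds_tendsto(1)[OF \<delta>_pos \<delta>_lim s_lt, of J]])
      (use bounds(2,3) in \<open>auto intro: always_eventually\<close>)
  then have "(\<lambda>n. ennreal (a n)) \<longlonglongrightarrow> ennreal (J / 2)" by (rule tendsto_ennrealI)
  moreover have "frac_energy (1 + 2 * s) = ennreal J"
    using frac_energy_finite[of "1 + 2 * s"] s_pos s_lt unfolding J_def by (simp add: ennreal_enn2real_if)
  then have "ennreal (J / 2) = ennreal (1 / 2) * frac_energy (1 + 2 * s)"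
    using ennreal_mult'[of "1 / 2" J] by simp
  moreover have "(\<lambda>n. Fs s (T n) (u n)) = (\<lambda>n. ennreal (a n))" using bounds(1) by simp
  ultimately show ?thesis unfolding gagliardo_frac_eq_frac_energy by simp
qed

end
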